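(* Let $F$ be a field of characteristic different from $2$ and $3$ such that $F^2=F$. Let $K_{10}=F\cdot 1\oplus(K_3\otimes K_3)$ be the Kac Jordan superalgebra in the realization described in the context, let $W=(K_3)_{\bar 1}$ and let $V=W\otimes W\subseteq (K_{10})_{\bar 0}$ with the symmetric bilinear form $b(s\otimes t,u\otimes v)=(s|u)(t|v)$. Let $\Psi\colon \mathrm{Aut}(K_{10})\to O(V,b)$, $\varphi\mapsto\varphi|_V$. Then $\Psi$ is surjective and $\ker\Psi=\{\mathrm{id},\tau\}$, where $\tau$ is the grading automorphism, $\tau(z)=(-1)^{\bar z}z$ for homogeneous $z\in K_{10}$.
   Context: The Kaplansky superalgebra $K_3$ has even part $Fe$ and odd part $W=Fx+Fy$, with products $e^2=e$, $e x=xe=\tfrac12 x$, $e y=ye=\tfrac12 y$, $xy=e$, $yx=-e$, $x^2=y^2=0$. It carries the supersymmetric bilinear form with $(e|e)=\tfrac12$, $(x|y)=1$, $(y|x)=-1$, $(x|x)=(y|y)=0$, and even and odd parts orthogonal. $K_{10}=F\cdot 1\oplus(K_3\otimes K_3)$ is the superalgebra in which $1$ is an even identity element, $a\otimes b$ (for homogeneous $a,b\in K_3$) has parity $\bar a+\bar b$, and $(a\otimes b)(c\otimes d)=(-1)^{\bar b\bar c}\bigl(ac\otimes bd-\tfrac34(a|c)(b|d)1\bigr)$ for homogeneous $a,b,c,d\in K_3$; this is (isomorphic to) the $10$-dimensional Kac Jordan superalgebra. $\mathrm{Aut}(K_{10})$ denotes the group of automorphisms of graded algebras (grading-preserving algebra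 automorphisms); each such automorphism leaves $V$ invariant and restricts to an isometry of $(V,b)$, so $\Psi$ is a group homomorphism. $O(V,b)$ is the orthogonal group of $(V,b)$. *)

theory Defs
  imports Main
begin

datatype k3b = E | X | Y

lemma UNIV_k3b: "(UNIV :: k3b set) = {E, X, Y}"
  using k3b.exhaust by auto

instance k3b :: finite
  by standard (simp add: UNIV_k3b)

definition k3odd :: "k3b \<Rightarrow> bool" where
  "k3odd a \<longleftrightarrow> a \<noteq> E"

text \<open>Product of basis elements of K3, as a coordinate vector w.r.t. (e,x,y).\<close>
fun k3mul :: "k3b \<Rightarrow> k3b \<Rightarrow> k3b \<Rightarrow> 'a::field" where
  "k3mul E E = (\<lambda>k. if k = E then 1 else 0)"
| "k3mul E X = (\<lambda>k. if k = X then 1/2 else 0)"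
| "k3mul X E = (\<lambda>k. if k = X then 1/2 else 0)"
| "k3mul E Y = (\<lambda>k. if k = Y then 1/2 else 0)"
| "k3mul Y E = (\<lambda>k. if k = Y then 1/2 else 0)"
| "k3mul X Y = (\<lambda>k. if k = E then 1 else 0)"
| "k3mul Y X = (\<lambda>k. if k = E then -1 else 0)"
| "k3mul X X = (\<lambda>k. 0)"
| "k3mul Y Y = (\<lambda>k. 0)"

fun k3form :: "k3b \<Rightarrow> k3b \<Rightarrow> 'a::field" where
  "k3form E E = 1/2"
| "k3form X Y = 1"
| "k3form Y X = -1"
| "k3form _ _ = 0"

text \<open>Basis of K10: the identity and the tensors of basis elements of K3.\<close>
datatype k10b = Unit | Ten k3b k3b

lemma UNIV_k10b: "(UNIV :: k10b set) = insert Unit (range (\<lambda>(a,b). Ten a b))"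
proof -
  have "i \<in> insert Unit (range (\<lambda>(a,b). Ten a b))" for i
    by (cases i) (auto simp: image_iff)
  then show ?thesis by auto
qed

instance k10b :: finite
  by standard (simp add: UNIV_k10b)

type_synonym 'a k10 = "k10b \<Rightarrow> 'a"

definition k10odd :: "k10b \<Rightarrow> bool" where
  "k10odd i = (case i of Unit \<Rightarrow> False | Ten a b \<Rightarrow> k3odd a \<noteq> k3odd b)"

definition basisvec :: "k10b \<Rightarrow> 'a::field k10" where
  "basisvec i = (\<lambda>k. if k = i then 1 else 0)"

text \<open>Product of basis elements of K10:
  (a(x)b)(c(x)d) = (-1)^(|b||c|) (ac (x) bd - 3/4 (a|c)(b|d) 1).\<close>
fun k10bmul :: "k10b \<Rightarrow> k10b \<Rightarrow> 'a::field k10" where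
  "k10bmul Unit j = basisvec j"
| "k10bmul (Ten a b) Unit = basisvec (Ten a b)"
| "k10bmul (Ten a b) (Ten c d) =
     (\<lambda>k. (if k3odd b \<and> k3odd c then -1 else 1) *
          (case k of
             Unit \<Rightarrow> - (3/4) * k3form a c * k3form b d
           | Ten p q \<Rightarrow> k3mul a c p * k3mul b d q))"

definition k10mul :: "'a::field k10 \<Rightarrow> 'a k10 \<Rightarrow> 'a k10" where
  "k10mul u v = (\<lambda>k. \<Sum>i\<in>UNIV. \<Sum>j\<in>UNIV. u i * v j * k10bmul i j k)"

definition k10add :: "'a::field k10 \<Rightarrow> 'a k10 \<Rightarrow> 'a k10" where
  "k10add u v = (\<lambda>k. u k + v k)"

definition k10smul :: "'a::field \<Rightarrow> 'a k10 \<Rightarrow> 'a k10" where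
  "k10smul c u = (\<lambda>k. c * u k)"

definition k10even_part :: "'a::field k10 set" where
  "k10even_part = {u. \<forall>i. k10odd i \<longrightarrow> u i = 0}"

definition k10odd_part :: "'a::field k10 set" where
  "k10odd_part = {u. \<forall>i. \<not> k10odd i \<longrightarrow> u i = 0}"

definition AutK10 :: "('a::field k10 \<Rightarrow> 'a k10) set" where
  "AutK10 = {\<phi>.
      (\<forall>u v. \<phi> (k10add u v) = k10add (\<phi> u) (\<phi> v))
    \<and> (\<forall>c u. \<phi> (k10smul c u) = k10smul c (\<phi> u))
    \<and> bij \<phi>
    \<and> (\<forall>u v. \<phi> (k10mul u v) = k10mul (\<phi> u) (\<phi> v))
    \<and> \<phi> ` k10even_part \<subseteq> k10even_part
    \<and> \<phi> ` k10odd_part \<subseteq> k10odd_part}"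

definition Vb :: "k10b set" where
  "Vb = {Ten s t | s t. k3odd s \<and> k3odd t}"

definition Vspace :: "'a::field k10 set" where
  "Vspace = {u. \<forall>i. i \<notin> Vb \<longrightarrow> u i = 0}"

definition bV :: "'a::field k10 \<Rightarrow> 'a k10 \<Rightarrow> 'a" where
  "bV u v = (\<Sum>s\<in>{X,Y}. \<Sum>t\<in>{X,Y}. \<Sum>p\<in>{X,Y}. \<Sum>q\<in>{X,Y}.
               u (Ten s t) * v (Ten p q) * k3form s p * k3form t q)"

text \<open>The orthogonal group O(V,b), represented by maps whose behaviour on V
  is a linear bijective isometry of V (only the restriction to V matters).\<close>
definition OVb :: "('a::field k10 \<Rightarrow> 'a k10) set" where
  "OVb = {g.
      (\<forall>u\<in>Vspace. \<forall>v\<in>Vspace. g (k10add u v) = k10add (g u) (g v))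
    \<and> (\<forall>c. \<forall>u\<in>Vspace. g (k10smul c u) = k10smul c (g u))
    \<and> bij_betw g Vspace Vspace
    \<and> (\<forall>u\<in>Vspace. \<forall>v\<in>Vspace. bV (g u) (g v) = bV u v)}"

definition tauK10 :: "'a::field k10 \<Rightarrow> 'a k10" where
  "tauK10 u = (\<lambda>i. if k10odd i then - u i else u i)"

end

theory Submission
  imports Defs
begin

text \<open>
  Every automorphism fixes \<open>1\<close> and the idempotent \<open>\<epsilon> = 2 e \<otimes> e - 1/2\<close>, which is the only
  nonzero even idempotent whose products with even elements are multiples of itself; hence it
  also fixes \<open>\<omega> = e \<otimes> e - 3/4\<close>. Elements of \<open>V\<close> multiply by \<open>u v = - b(u, v) \<omega>\<close>, while an
  element \<open>\<lambda> \<omega> + w\<close> (\<open>w \<in> V\<close>) of the annihilator of \<open>\<epsilon>\<close> has its square in \<open>F \<omega>\<close> only if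
  \<open>\<lambda> w = 0\<close>. So automorphisms map \<open>V\<close> to \<open>V\<close>, isometrically.

  Conversely, \<open>(V, b)\<close> is \<open>M\<^sub>2(F)\<close> with the polarized determinant, and (using square roots in
  \<open>F\<close>) every isometry is \<open>M \<mapsto> A M B\<close> or \<open>M \<mapsto> A M\<^sup>T B\<close> with \<open>A, B \<in> SL\<^sub>2(F)\<close>. These are
  the restrictions of tensor products of automorphisms of K3, composed in the second case with
  the super-twist \<open>a \<otimes> b \<mapsto> (-1)^{|a||b|} b \<otimes> a\<close>.

  An automorphism fixing \<open>V\<close> pointwise commutes with multiplication by \<open>V\<close>; the odd part is an
  irreducible module for it, so the automorphism acts there by a scalar \<open>\<lambda>\<close> with \<open>\<lambda>\<^sup>2 = 1\<close>.
\<close>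

lemma numeral_Bit0_eq_0_iff:
  assumes "(2::'a::field) \<noteq> 0"
  shows "(numeral (Num.Bit0 n) = (0::'a)) \<longleftrightarrow> (numeral n = (0::'a))"
proof -
  have "(numeral (Num.Bit0 n) :: 'a) = 2 * numeral n"
    by (metis mult_2 numeral_Bit0)
  then show ?thesis using assms by (metis mult_eq_0_iff)
qed

lemma sum_swap_outer_inner:
  "(\<Sum>l\<in>A. \<Sum>i\<in>B. \<Sum>j\<in>C. f i j l) = (\<Sum>i\<in>B. \<Sum>j\<in>C. \<Sum>l\<in>A. f i j l)"
  by (subst sum.swap) (rule sum.cong[OF refl sum.swap])

lemma sum_swap_pairs:
  "(\<Sum>i\<in>A. \<Sum>j\<in>B. \<Sum>i'\<in>C. \<Sum>j'\<in>D. f i j i' j')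
   = (\<Sum>i'\<in>C. \<Sum>j'\<in>D. \<Sum>i\<in>A. \<Sum>j\<in>B. f i j i' j')"
proof -
  have "(\<Sum>i\<in>A. \<Sum>j\<in>B. \<Sum>i'\<in>C. \<Sum>j'\<in>D. f i j i' j')
      = (\<Sum>i\<in>A. \<Sum>i'\<in>C. \<Sum>j\<in>B. \<Sum>j'\<in>D. f i j i' j')"
    by (rule sum.cong[OF refl sum.swap])
  also have "\<dots> = (\<Sum>i'\<in>C. \<Sum>i\<in>A. \<Sum>j\<in>B. \<Sum>j'\<in>D. f i j i' j')"
    by (rule sum.swap)
  also have "\<dots> = (\<Sum>i'\<in>C. \<Sum>j'\<in>D. \<Sum>i\<in>A. \<Sum>j\<in>B. f i j i' j')"
    by (rule sum.cong[OF refl sum_swap_outer_inner[symmetric]])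
  finally show ?thesis .
qed

lemma sum_product_pairs:
  "(\<Sum>p\<in>A. \<Sum>q\<in>B. \<Sum>p'\<in>C. \<Sum>q'\<in>D. F p p' * G q q' :: 'a::comm_semiring_0)
   = (\<Sum>p\<in>A. \<Sum>p'\<in>C. F p p') * (\<Sum>q\<in>B. \<Sum>q'\<in>D. G q q')"
  by (simp only: sum_product)

lemma sum_UNIV_k3b: "(\<Sum>x\<in>(UNIV::k3b set). f x) = f E + f X + f Y"
  by (simp add: UNIV_k3b add.assoc)

lemma UNIV_k10b_enum:
  "(UNIV::k10b set) = {Unit, Ten E E, Ten E X, Ten E Y, Ten X E, Ten X X, Ten X Y, Ten Y E, Ten Y X, Ten Y Y}"
proof -
  have "i \<in> {Unit, Ten E E, Ten E X, Ten E Y, Ten X E, Ten X X, Ten X Y, Ten Y E, Ten Y X, Ten Y Y}" for i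
  proof (cases i)
    case (Ten a b) then show ?thesis by (cases a; cases b) simp_all
  qed simp
  then show ?thesis by (rule UNIV_eq_I)
qed

lemma sum_UNIV_k10b: "(\<Sum>i\<in>(UNIV::k10b set). f i) = f Unit +
  (f (Ten E E) + f (Ten E X) + f (Ten E Y)) + (f (Ten X E) + f (Ten X X) + f (Ten X Y)) +
  (f (Ten Y E) + f (Ten Y X) + f (Ten Y Y))"
  by (simp add: UNIV_k10b_enum add.assoc)

lemma sum_UNIV_k10b_split:
  "(\<Sum>i\<in>(UNIV::k10b set). f i) = f Unit + (\<Sum>p\<in>UNIV. \<Sum>q\<in>UNIV. f (Ten p q))"
  by (simp add: sum_UNIV_k10b sum_UNIV_k3b add.assoc)

lemma k10_eqI:
  assumes "u Unit = v Unit" "u (Ten E E) = v (Ten E E)" "u (Ten E X) = v (Ten E X)"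
    "u (Ten E Y) = v (Ten E Y)" "u (Ten X E) = v (Ten X E)" "u (Ten X X) = v (Ten X X)"
    "u (Ten X Y) = v (Ten X Y)" "u (Ten Y E) = v (Ten Y E)" "u (Ten Y X) = v (Ten Y X)"
    "u (Ten Y Y) = v (Ten Y Y)"
  shows "u = v"
proof
  fix k show "u k = v k"
  proof (cases k)
    case (Ten p q) then show ?thesis using assms by (cases p; cases q) simp_all
  qed (use assms in simp)
qed

lemma k10even_part_iff:
  "u \<in> k10even_part \<longleftrightarrow> u (Ten E X) = 0 \<and> u (Ten E Y) = 0 \<and> u (Ten X E) = 0 \<and> u (Ten Y E) = 0"
proof -
  have "k10odd i \<longleftrightarrow> i \<in> {Ten E X, Ten E Y, Ten X E, Ten Y E}" for i
  proof (cases i)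
    case (Ten a b) then show ?thesis by (cases a; cases b) (simp_all add: k10odd_def k3odd_def)
  qed (simp add: k10odd_def)
  then show ?thesis by (auto simp: k10even_part_def)
qed

lemma k10odd_part_iff:
  "u \<in> k10odd_part \<longleftrightarrow> u Unit = 0 \<and> u (Ten E E) = 0 \<and> u (Ten X X) = 0 \<and> u (Ten X Y) = 0
     \<and> u (Ten Y X) = 0 \<and> u (Ten Y Y) = 0"
proof
  assume "u \<in> k10odd_part"
  then show "u Unit = 0 \<and> u (Ten E E) = 0 \<and> u (Ten X X) = 0 \<and> u (Ten X Y) = 0 \<and> u (Ten Y X) = 0 \<and> u (Ten Y Y) = 0"
    by (simp add: k10odd_part_def k10odd_def k3odd_def)
next
  assume u: "u Unit = 0 \<and> u (Ten E E) = 0 \<and> u (Ten X X) = 0 \<and> u (Ten X Y) = 0 \<and> u (Ten Y X) = 0 \<and> u (Ten Y Y) = 0"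
  have "u i = 0" if "\<not> k10odd i" for i
  proof (cases i)
    case (Ten s t) then show ?thesis using u that by (cases s; cases t) (auto simp: k10odd_def k3odd_def)
  qed (use u in simp)
  then show "u \<in> k10odd_part" by (simp add: k10odd_part_def)
qed

lemma Vspace_iff:
  "v \<in> Vspace \<longleftrightarrow> v Unit = 0 \<and> v (Ten E E) = 0 \<and> v (Ten E X) = 0 \<and> v (Ten E Y) = 0
    \<and> v (Ten X E) = 0 \<and> v (Ten Y E) = 0"
proof
  assume "v \<in> Vspace"
  then show "v Unit = 0 \<and> v (Ten E E) = 0 \<and> v (Ten E X) = 0 \<and> v (Ten E Y) = 0 \<and> v (Ten X E) = 0 \<and> v (Ten Y E) = 0"
    by (simp add: Vspace_def Vb_def k3odd_def)
next
  assume v: "v Unit = 0 \<and> v (Ten E E) = 0 \<and> v (Ten E X) = 0 \<and> v (Ten E Y) = 0 \<and> v (Ten X E) = 0 \<and> v (Ten Y E) = 0"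
  have "v i = 0" if "i \<notin> Vb" for i
  proof (cases i)
    case (Ten s t)
    then have "s = E \<or> t = E" using that by (auto simp: Vb_def k3odd_def)
    then show ?thesis using v Ten by (cases s; cases t) auto
  qed (use v in simp)
  then show "v \<in> Vspace" by (simp add: Vspace_def)
qed

lemma Vspace_subset_even: "v \<in> Vspace \<Longrightarrow> v \<in> k10even_part"
  by (simp add: Vspace_iff k10even_part_iff)

lemma mult_basisvec: "x * basisvec i j = (if j = i then x else 0)"
  by (simp add: basisvec_def)

lemma basisvec_mult: "basisvec i j * x = (if j = i then x else 0)"
  by (simp add: basisvec_def)

lemma sum_basisvec: "(\<Sum>i\<in>UNIV. u i * basisvec i k) = u k"
  by (simp add: mult_basisvec)

lemma k10mul_basisvec_left: "k10mul (basisvec i) u k = (\<Sum>j\<in>UNIV. u j * k10bmul i j k)"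
proof -
  have "k10mul (basisvec i) u k = (\<Sum>i'\<in>UNIV. basisvec i i' * (\<Sum>j\<in>UNIV. u j * k10bmul i' j k))"
    by (simp add: k10mul_def sum_distrib_left mult.assoc)
  then show ?thesis by (simp add: basisvec_mult)
qed

lemma k10mul_basisvec_right: "k10mul u (basisvec j) k = (\<Sum>i\<in>UNIV. u i * k10bmul i j k)"
proof -
  have "k10mul u (basisvec j) k = (\<Sum>i\<in>UNIV. u i * (\<Sum>j'\<in>UNIV. basisvec j j' * k10bmul i j' k))"
    by (simp add: k10mul_def sum_distrib_left mult.assoc)
  then show ?thesis by (simp add: basisvec_mult)
qed

lemma k10mul_basisvec: "k10mul (basisvec i) (basisvec j) = k10bmul i j"
  by (rule ext) (simp add: k10mul_basisvec_left basisvec_mult)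

lemma k10smul_k10smul: "k10smul a (k10smul b u) = k10smul (a * b) u"
  by (simp add: k10smul_def mult.assoc)

lemma k10mul_smul_left: "k10mul (k10smul c u) v = k10smul c (k10mul u v)"
  by (simp add: k10mul_def k10smul_def sum_distrib_left mult_ac)

lemma k10mul_smul_right: "k10mul u (k10smul c v) = k10smul c (k10mul u v)"
  by (simp add: k10mul_def k10smul_def sum_distrib_left mult_ac)

lemma k10mul_one_left: "k10mul (basisvec Unit) u = u"
  by (rule ext) (simp add: k10mul_basisvec_left sum_basisvec)

lemma k10bmul_Unit_right: "k10bmul i Unit = basisvec i"
  by (cases i) auto

lemma k10mul_one_right: "k10mul u (basisvec Unit) = u"
  by (rule ext) (simp add: k10mul_basisvec_right k10bmul_Unit_right sum_basisvec)

section \<open>Linear extension and automorphisms\<close>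

definition lin_ext :: "(k10b \<Rightarrow> 'a k10) \<Rightarrow> 'a::field k10 \<Rightarrow> 'a k10" where
  "lin_ext \<Phi> u = (\<lambda>k. \<Sum>i\<in>UNIV. u i * \<Phi> i k)"

lemma lin_ext_mul:
  assumes "\<And>i j. lin_ext \<Phi> (k10bmul i j) = k10mul (\<Phi> i) (\<Phi> j)"
  shows "lin_ext \<Phi> (k10mul u v) = k10mul (lin_ext \<Phi> u) (lin_ext \<Phi> v)"
proof
  fix k
  have "lin_ext \<Phi> (k10mul u v) k
      = (\<Sum>l\<in>UNIV. \<Sum>i\<in>UNIV. \<Sum>j\<in>UNIV. u i * v j * (k10bmul i j l * \<Phi> l k))"
    by (simp add: lin_ext_def k10mul_def sum_distrib_right mult.assoc)
  also have "\<dots> = (\<Sum>i\<in>UNIV. \<Sum>j\<in>UNIV. \<Sum>l\<in>UNIV. u i * v j * (k10bmul i j l * \<Phi> l k))"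
    by (rule sum_swap_outer_inner)
  also have "\<dots> = (\<Sum>i\<in>UNIV. \<Sum>j\<in>UNIV. u i * v j * lin_ext \<Phi> (k10bmul i j) k)"
    by (simp add: lin_ext_def sum_distrib_left)
  also have "\<dots> = (\<Sum>i\<in>UNIV. \<Sum>j\<in>UNIV. \<Sum>i'\<in>UNIV. \<Sum>j'\<in>UNIV.
      u i * \<Phi> i i' * (v j * \<Phi> j j') * k10bmul i' j' k)"
    by (simp add: assms k10mul_def sum_distrib_left mult_ac)
  also have "\<dots> = (\<Sum>i'\<in>UNIV. \<Sum>j'\<in>UNIV. \<Sum>i\<in>UNIV. \<Sum>j\<in>UNIV.
      u i * \<Phi> i i' * (v j * \<Phi> j j') * k10bmul i' j' k)"
    by (rule sum_swap_pairs)
  also have "\<dots> = k10mul (lin_ext \<Phi> u) (lin_ext \<Phi> v) k"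
    by (simp only: k10mul_def lin_ext_def sum_product) (simp add: sum_distrib_right)
  finally show "lin_ext \<Phi> (k10mul u v) k = k10mul (lin_ext \<Phi> u) (lin_ext \<Phi> v) k" .
qed

lemma lin_ext_add: "lin_ext \<Phi> (k10add u v) = k10add (lin_ext \<Phi> u) (lin_ext \<Phi> v)"
  by (simp add: lin_ext_def k10add_def distrib_right sum.distrib)

lemma lin_ext_smul: "lin_ext \<Phi> (k10smul c u) = k10smul c (lin_ext \<Phi> u)"
  by (simp add: lin_ext_def k10smul_def sum_distrib_left mult.assoc)

lemma lin_ext_basisvec: "lin_ext \<Phi> (basisvec j) = \<Phi> j"
  by (rule ext) (simp add: lin_ext_def basisvec_mult)

lemma lin_ext_basisvec_id: "lin_ext basisvec u = u"
  by (simp add: lin_ext_def sum_basisvec)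

lemma lin_ext_comp: "lin_ext \<Psi> (lin_ext \<Phi> u) = lin_ext (\<lambda>i. lin_ext \<Psi> (\<Phi> i)) u"
proof
  fix k
  have "lin_ext \<Psi> (lin_ext \<Phi> u) k = (\<Sum>j\<in>UNIV. \<Sum>i\<in>UNIV. u i * (\<Phi> i j * \<Psi> j k))"
    by (simp add: lin_ext_def sum_distrib_right mult.assoc)
  also have "\<dots> = (\<Sum>i\<in>UNIV. \<Sum>j\<in>UNIV. u i * (\<Phi> i j * \<Psi> j k))"
    by (rule sum.swap)
  also have "\<dots> = lin_ext (\<lambda>i. lin_ext \<Psi> (\<Phi> i)) u k"
    by (simp add: lin_ext_def sum_distrib_left)
  finally show "lin_ext \<Psi> (lin_ext \<Phi> u) k = lin_ext (\<lambda>i. lin_ext \<Psi> (\<Phi> i)) u k" .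
qed

lemma lin_ext_inverse:
  assumes "\<And>i. lin_ext \<Psi> (\<Phi> i) = basisvec i"
  shows "lin_ext \<Psi> (lin_ext \<Phi> u) = u"
  by (simp add: lin_ext_comp assms lin_ext_basisvec_id)

lemma lin_ext_vanishes:
  assumes "\<And>i k. \<Phi> i k \<noteq> 0 \<Longrightarrow> P i = P k" and "\<And>i. P i \<Longrightarrow> u i = 0" and "P k"
  shows "lin_ext \<Phi> u k = 0"
  unfolding lin_ext_def by (rule sum.neutral) (use assms in fastforce)

lemma lin_ext_in_AutK10:
  assumes mul: "\<And>i j. lin_ext \<Phi> (k10bmul i j) = k10mul (\<Phi> i) (\<Phi> j)"
    and inv1: "\<And>i. lin_ext \<Psi> (\<Phi> i) = basisvec i"
    and inv2: "\<And>i. lin_ext \<Phi> (\<Psi> i) = basisvec i"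
    and parity: "\<And>i k. \<Phi> i k \<noteq> 0 \<Longrightarrow> k10odd i = k10odd k"
  shows "lin_ext \<Phi> \<in> AutK10"
proof -
  have "bij (lin_ext \<Phi>)"
    by (rule o_bij[where g = "lin_ext \<Psi>"]) (auto simp: lin_ext_inverse inv1 inv2)
  moreover have "lin_ext \<Phi> ` k10even_part \<subseteq> k10even_part"
    using lin_ext_vanishes[where P = k10odd, OF parity] by (auto simp: k10even_part_def)
  moreover have "lin_ext \<Phi> ` k10odd_part \<subseteq> k10odd_part"
    using lin_ext_vanishes[where P = "\<lambda>i. \<not> k10odd i"] parity by (auto simp: k10odd_part_def)
  ultimately show ?thesis
    by (auto simp: AutK10_def lin_ext_add lin_ext_smul lin_ext_mul mul)
qed

lemma AutK10_add: "\<phi> \<in> AutK10 \<Longrightarrow> \<phi> (k10add u v) = k10add (\<phi> u) (\<phi> v)"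
  by (simp add: AutK10_def)

lemma AutK10_smul: "\<phi> \<in> AutK10 \<Longrightarrow> \<phi> (k10smul c u) = k10smul c (\<phi> u)"
  by (simp add: AutK10_def)

lemma AutK10_mul: "\<phi> \<in> AutK10 \<Longrightarrow> \<phi> (k10mul u v) = k10mul (\<phi> u) (\<phi> v)"
  by (simp add: AutK10_def)

lemma AutK10_bij: "\<phi> \<in> AutK10 \<Longrightarrow> bij \<phi>"
  by (simp add: AutK10_def)

lemma AutK10_even: "\<phi> \<in> AutK10 \<Longrightarrow> u \<in> k10even_part \<Longrightarrow> \<phi> u \<in> k10even_part"
  by (auto simp: AutK10_def)

lemma AutK10_odd: "\<phi> \<in> AutK10 \<Longrightarrow> u \<in> k10odd_part \<Longrightarrow> \<phi> u \<in> k10odd_part"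
  by (auto simp: AutK10_def)

lemma AutK10_inj: "\<phi> \<in> AutK10 \<Longrightarrow> \<phi> u = \<phi> v \<Longrightarrow> u = v"
  using AutK10_bij by (metis bij_is_inj injD)

lemma AutK10_zero: "\<phi> \<in> AutK10 \<Longrightarrow> \<phi> (\<lambda>_. 0) = (\<lambda>_. 0)"
  using AutK10_smul[of \<phi> 0 "\<lambda>_. 0"] by (simp add: k10smul_def)

lemma AutK10_eq_lin_ext:
  assumes "\<phi> \<in> AutK10"
  shows "\<phi> = lin_ext (\<lambda>i. \<phi> (basisvec i))"
proof
  fix u :: "'a k10"
  have "\<phi> (\<lambda>k. \<Sum>i\<in>S. u i * basisvec i k) = (\<lambda>k. \<Sum>i\<in>S. u i * \<phi> (basisvec i) k)" if "finite S" for S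
    using that
  proof (induction S rule: finite_induct)
    case empty
    then show ?case using AutK10_zero[OF assms] by simp
  next
    case (insert i S)
    have "(\<lambda>k. \<Sum>i\<in>insert i S. u i * basisvec i k)
        = k10add (k10smul (u i) (basisvec i)) (\<lambda>k. \<Sum>i\<in>S. u i * basisvec i k)"
      using insert by (simp add: k10add_def k10smul_def)
    then show ?case
      using insert AutK10_add[OF assms] AutK10_smul[OF assms] by (simp add: k10add_def k10smul_def)
  qed
  from this[of UNIV] show "\<phi> u = lin_ext (\<lambda>i. \<phi> (basisvec i)) u"
    by (simp add: lin_ext_def sum_basisvec)
qed

lemma AutK10_eqI:
  assumes "\<phi> \<in> AutK10" "\<psi> \<in> AutK10" and "\<And>i. \<phi> (basisvec i) = \<psi> (basisvec i)"
  shows "\<phi> = \<psi>"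
proof -
  have "\<phi> = lin_ext (\<lambda>i. \<phi> (basisvec i))" by (rule AutK10_eq_lin_ext[OF assms(1)])
  also have "(\<lambda>i. \<phi> (basisvec i)) = (\<lambda>i. \<psi> (basisvec i))" using assms(3) by (rule ext)
  also have "lin_ext (\<lambda>i. \<psi> (basisvec i)) = \<psi>" by (rule AutK10_eq_lin_ext[OF assms(2), symmetric])
  finally show ?thesis .
qed

lemma AutK10_one:
  assumes "\<phi> \<in> AutK10"
  shows "\<phi> (basisvec Unit) = basisvec Unit"
proof -
  obtain w where w: "\<phi> w = basisvec Unit"
    using AutK10_bij[OF assms] by (metis bij_pointE)
  have "\<phi> (basisvec Unit) = k10mul (\<phi> (basisvec Unit)) (\<phi> w)"
    by (simp add: w k10mul_one_right)
  also have "\<dots> = \<phi> (k10mul (basisvec Unit) w)"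
    by (simp add: AutK10_mul[OF assms])
  also have "\<dots> = basisvec Unit"
    by (simp add: k10mul_one_left w)
  finally show ?thesis .
qed

lemma k10_even_odd_decomp:
  obtains ue uo where "ue \<in> k10even_part" "uo \<in> k10odd_part" "u = k10add ue uo"
proof
  show "(\<lambda>k. if k10odd k then 0 else u k) \<in> k10even_part"
    and "(\<lambda>k. if k10odd k then u k else 0) \<in> k10odd_part"
    by (auto simp: k10even_part_def k10odd_part_def)
qed (auto simp: k10add_def)

lemma k10_even_odd_zero: "u \<in> k10even_part \<Longrightarrow> u \<in> k10odd_part \<Longrightarrow> u = (\<lambda>_. 0)"
  by (auto simp: k10even_part_def k10odd_part_def)

lemma AutK10_even_reflect:
  assumes A: "\<phi> \<in> AutK10" and "\<phi> u \<in> k10even_part"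
  shows "u \<in> k10even_part"
proof -
  obtain ue uo where ue: "ue \<in> k10even_part" and uo: "uo \<in> k10odd_part" and u: "u = k10add ue uo"
    by (rule k10_even_odd_decomp)
  have "\<phi> uo = (\<lambda>k. \<phi> u k - \<phi> ue k)"
    unfolding u AutK10_add[OF A] by (simp add: k10add_def)
  then have "\<phi> uo \<in> k10even_part"
    using assms(2) AutK10_even[OF A ue] by (simp add: k10even_part_def)
  then have "\<phi> uo = \<phi> (\<lambda>_. 0)"
    using k10_even_odd_zero AutK10_odd[OF A uo] AutK10_zero[OF A] by simp
  then have "uo = (\<lambda>_. 0)"
    by (rule AutK10_inj[OF A])
  then show ?thesis
    using ue by (simp add: u k10add_def)
qed

lemma AutK10_odd_reflect:
  assumes A: "\<phi> \<in> AutK10" and "\<phi> u \<in> k10odd_part"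
  shows "u \<in> k10odd_part"
proof -
  obtain ue uo where ue: "ue \<in> k10even_part" and uo: "uo \<in> k10odd_part" and u: "u = k10add ue uo"
    by (rule k10_even_odd_decomp)
  have "\<phi> ue = (\<lambda>k. \<phi> u k - \<phi> uo k)"
    unfolding u AutK10_add[OF A] by (simp add: k10add_def)
  then have "\<phi> ue \<in> k10odd_part"
    using assms(2) AutK10_odd[OF A uo] by (simp add: k10odd_part_def)
  then have "\<phi> ue = \<phi> (\<lambda>_. 0)"
    using k10_even_odd_zero AutK10_even[OF A ue] AutK10_zero[OF A] by simp
  then have "ue = (\<lambda>_. 0)"
    by (rule AutK10_inj[OF A])
  then show ?thesis
    using uo by (simp add: u k10add_def)
qed

lemma id_in_AutK10: "id \<in> AutK10"
  by (simp add: AutK10_def)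

lemma AutK10_comp: "\<phi> \<in> AutK10 \<Longrightarrow> \<psi> \<in> AutK10 \<Longrightarrow> \<phi> \<circ> \<psi> \<in> AutK10"
  by (auto simp: AutK10_def bij_comp image_subset_iff)

lemma AutK10_inv:
  assumes A: "\<phi> \<in> AutK10"
  shows "inv \<phi> \<in> AutK10"
proof -
  have bij: "bij \<phi>" by (rule AutK10_bij[OF A])
  then have f_inv: "\<phi> (inv \<phi> y) = y" and inv_f: "inv \<phi> (\<phi> x) = x" for x y
    by (simp_all add: bij_is_surj surj_f_inv_f bij_is_inj)
  have "inv \<phi> (k10add u v) = k10add (inv \<phi> u) (inv \<phi> v)" for u v
    by (metis AutK10_add[OF A] f_inv inv_f)
  moreover have "inv \<phi> (k10smul c u) = k10smul c (inv \<phi> u)" for c u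
    by (metis AutK10_smul[OF A] f_inv inv_f)
  moreover have "inv \<phi> (k10mul u v) = k10mul (inv \<phi> u) (inv \<phi> v)" for u v
    by (metis AutK10_mul[OF A] f_inv inv_f)
  moreover have "inv \<phi> ` k10even_part \<subseteq> k10even_part" "inv \<phi> ` k10odd_part \<subseteq> k10odd_part"
    using AutK10_even_reflect[OF A] AutK10_odd_reflect[OF A] f_inv by auto
  ultimately show ?thesis
    using bij_imp_bij_inv[OF bij] by (simp add: AutK10_def)
qed

section \<open>Tensor products of automorphisms of K3\<close>

definition k3sign :: "k3b \<Rightarrow> k3b \<Rightarrow> 'a::field" where
  "k3sign s t = (if k3odd s \<and> k3odd t then -1 else 1)"

text \<open>\<open>\<alpha> a p\<close> is the \<open>p\<close>-coordinate of the image of the basis vector \<open>a\<close> of K3.\<close>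
definition k3_iso_aut :: "(k3b \<Rightarrow> k3b \<Rightarrow> 'a::field) \<Rightarrow> bool" where
  "k3_iso_aut \<alpha> \<longleftrightarrow> (\<forall>a p. \<alpha> a p \<noteq> 0 \<longrightarrow> k3odd a = k3odd p)
     \<and> (\<forall>a c q. (\<Sum>r\<in>UNIV. k3mul a c r * \<alpha> r q)
                  = (\<Sum>p\<in>UNIV. \<Sum>p'\<in>UNIV. \<alpha> a p * \<alpha> c p' * k3mul p p' q))
     \<and> (\<forall>a c. (\<Sum>p\<in>UNIV. \<Sum>p'\<in>UNIV. \<alpha> a p * \<alpha> c p' * k3form p p') = k3form a c)"

lemma k3_iso_aut_parity: "k3_iso_aut \<alpha> \<Longrightarrow> \<alpha> a p \<noteq> 0 \<Longrightarrow> k3odd a = k3odd p"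
  by (simp add: k3_iso_aut_def)

lemma k3_iso_aut_mul:
  "k3_iso_aut \<alpha> \<Longrightarrow>
    (\<Sum>p\<in>UNIV. \<Sum>p'\<in>UNIV. \<alpha> a p * \<alpha> c p' * k3mul p p' q) = (\<Sum>r\<in>UNIV. k3mul a c r * \<alpha> r q)"
  by (simp add: k3_iso_aut_def)

lemma k3_iso_aut_form:
  "k3_iso_aut \<alpha> \<Longrightarrow> (\<Sum>p\<in>UNIV. \<Sum>p'\<in>UNIV. \<alpha> a p * \<alpha> c p' * k3form p p') = k3form a c"
  by (simp add: k3_iso_aut_def)

definition tensor_map :: "(k3b \<Rightarrow> k3b \<Rightarrow> 'a) \<Rightarrow> (k3b \<Rightarrow> k3b \<Rightarrow> 'a) \<Rightarrow> k10b \<Rightarrow> 'a::field k10" where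
  "tensor_map \<alpha> \<beta> i = (case i of
      Unit \<Rightarrow> basisvec Unit
    | Ten a b \<Rightarrow> (\<lambda>k. case k of Unit \<Rightarrow> 0 | Ten p q \<Rightarrow> \<alpha> a p * \<beta> b q))"

lemma tensor_map_parity:
  "k3_iso_aut \<alpha> \<Longrightarrow> k3_iso_aut \<beta> \<Longrightarrow> tensor_map \<alpha> \<beta> i k \<noteq> 0 \<Longrightarrow> k10odd i = k10odd k"
  by (cases i; cases k)
    (auto simp: tensor_map_def basisvec_def k10odd_def dest: k3_iso_aut_parity split: if_splits)

text \<open>Parity preservation makes the sign \<open>(-1)^{|q||p'|}\<close> of every surviving term equal to
  \<open>(-1)^{|b||c|}\<close>, so the product of two tensor images factors.\<close>
lemma tensor_map_sum_factor:
  assumes \<alpha>: "k3_iso_aut \<alpha>" and \<beta>: "k3_iso_aut \<beta>"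
  shows "(\<Sum>p\<in>UNIV. \<Sum>q\<in>UNIV. \<Sum>p'\<in>UNIV. \<Sum>q'\<in>UNIV.
            \<alpha> a p * \<beta> b q * (\<alpha> c p' * \<beta> d q') * (k3sign q p' * (F p p' * G q q')))
       = k3sign b c * ((\<Sum>p\<in>UNIV. \<Sum>p'\<in>UNIV. \<alpha> a p * \<alpha> c p' * F p p')
                       * (\<Sum>q\<in>UNIV. \<Sum>q'\<in>UNIV. \<beta> b q * \<beta> d q' * G q q'))"
proof -
  have sign: "\<beta> b q * \<alpha> c p' * k3sign q p' = \<beta> b q * \<alpha> c p' * k3sign b c" for q p'
    using k3_iso_aut_parity[OF \<alpha>, of c p'] k3_iso_aut_parity[OF \<beta>, of b q]
    by (cases "\<beta> b q = 0 \<or> \<alpha> c p' = 0") (auto simp: k3sign_def)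
  have summand: "\<alpha> a p * \<beta> b q * (\<alpha> c p' * \<beta> d q') * (k3sign q p' * (F p p' * G q q'))
      = k3sign b c * ((\<alpha> a p * \<alpha> c p' * F p p') * (\<beta> b q * \<beta> d q' * G q q'))" for p q p' q'
  proof -
    have "\<alpha> a p * \<beta> b q * (\<alpha> c p' * \<beta> d q') * (k3sign q p' * (F p p' * G q q'))
        = \<alpha> a p * \<beta> d q' * F p p' * G q q' * (\<beta> b q * \<alpha> c p' * k3sign q p')"
      by (simp only: mult_ac)
    then show ?thesis by (simp only: sign) (simp only: mult_ac)
  qed
  show ?thesis
    unfolding sum_product_pairs[symmetric] by (simp only: summand sum_distrib_left)
qed

lemma k10mul_tensor_map_Ten:
  "k10mul (tensor_map \<alpha> \<beta> (Ten a b)) (tensor_map \<alpha> \<beta> (Ten c d)) k =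
     (\<Sum>p\<in>UNIV. \<Sum>q\<in>UNIV. \<Sum>p'\<in>UNIV. \<Sum>q'\<in>UNIV.
        \<alpha> a p * \<beta> b q * (\<alpha> c p' * \<beta> d q') * k10bmul (Ten p q) (Ten p' q') k)"
  by (simp add: k10mul_def sum_UNIV_k10b_split tensor_map_def sum_distrib_left sum_distrib_right)

lemma lin_ext_tensor_map_mul_Ten:
  assumes \<alpha>: "k3_iso_aut \<alpha>" and \<beta>: "k3_iso_aut \<beta>"
  shows "lin_ext (tensor_map \<alpha> \<beta>) (k10bmul (Ten a b) (Ten c d))
       = k10mul (tensor_map \<alpha> \<beta> (Ten a b)) (tensor_map \<alpha> \<beta> (Ten c d))"
proof
  fix k
  note rhs = k10mul_tensor_map_Ten[of \<alpha> \<beta> a b c d k]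
  show "lin_ext (tensor_map \<alpha> \<beta>) (k10bmul (Ten a b) (Ten c d)) k
      = k10mul (tensor_map \<alpha> \<beta> (Ten a b)) (tensor_map \<alpha> \<beta> (Ten c d)) k"
  proof (cases k)
    case Unit
    have "lin_ext (tensor_map \<alpha> \<beta>) (k10bmul (Ten a b) (Ten c d)) k = - (3/4) * (k3sign b c * (k3form a c * k3form b d))"
      by (simp add: Unit lin_ext_def sum_UNIV_k10b_split tensor_map_def basisvec_def k3sign_def)
    also have "\<dots> = - (3/4) * (k3sign b c * ((\<Sum>p\<in>UNIV. \<Sum>p'\<in>UNIV. \<alpha> a p * \<alpha> c p' * k3form p p')
                   * (\<Sum>q\<in>UNIV. \<Sum>q'\<in>UNIV. \<beta> b q * \<beta> d q' * k3form q q')))"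
      by (simp only: k3_iso_aut_form[OF \<alpha>] k3_iso_aut_form[OF \<beta>])
    also have "\<dots> = - (3/4) * (\<Sum>p\<in>UNIV. \<Sum>q\<in>UNIV. \<Sum>p'\<in>UNIV. \<Sum>q'\<in>UNIV.
        \<alpha> a p * \<beta> b q * (\<alpha> c p' * \<beta> d q') * (k3sign q p' * (k3form p p' * k3form q q')))"
      by (simp only: tensor_map_sum_factor[OF \<alpha> \<beta>])
    also have "\<dots> = k10mul (tensor_map \<alpha> \<beta> (Ten a b)) (tensor_map \<alpha> \<beta> (Ten c d)) k"
      using rhs by (simp add: Unit k3sign_def sum_distrib_left mult_ac)
    finally show ?thesis .
  next
    case (Ten r t)
    have "lin_ext (tensor_map \<alpha> \<beta>) (k10bmul (Ten a b) (Ten c d)) k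
        = k3sign b c * (\<Sum>r'\<in>UNIV. \<Sum>t'\<in>UNIV. (k3mul a c r' * \<alpha> r' r) * (k3mul b d t' * \<beta> t' t))"
      by (simp add: Ten lin_ext_def sum_UNIV_k10b_split tensor_map_def basisvec_def k3sign_def
          sum_distrib_left mult_ac)
    also have "\<dots> = k3sign b c * ((\<Sum>r'\<in>UNIV. k3mul a c r' * \<alpha> r' r) * (\<Sum>t'\<in>UNIV. k3mul b d t' * \<beta> t' t))"
      by (simp only: sum_product)
    also have "\<dots> = k3sign b c * ((\<Sum>p\<in>UNIV. \<Sum>p'\<in>UNIV. \<alpha> a p * \<alpha> c p' * k3mul p p' r)
                   * (\<Sum>q\<in>UNIV. \<Sum>q'\<in>UNIV. \<beta> b q * \<beta> d q' * k3mul q q' t))"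
      by (simp add: k3_iso_aut_mul[OF \<alpha>] k3_iso_aut_mul[OF \<beta>])
    also have "\<dots> = (\<Sum>p\<in>UNIV. \<Sum>q\<in>UNIV. \<Sum>p'\<in>UNIV. \<Sum>q'\<in>UNIV.
        \<alpha> a p * \<beta> b q * (\<alpha> c p' * \<beta> d q') * (k3sign q p' * (k3mul p p' r * k3mul q q' t)))"
      by (simp only: tensor_map_sum_factor[OF \<alpha> \<beta>])
    also have "\<dots> = k10mul (tensor_map \<alpha> \<beta> (Ten a b)) (tensor_map \<alpha> \<beta> (Ten c d)) k"
      using rhs by (simp add: Ten k3sign_def mult_ac)
    finally show ?thesis .
  qed
qed

lemma lin_ext_tensor_map_mul:
  assumes \<alpha>: "k3_iso_aut \<alpha>" and \<beta>: "k3_iso_aut \<beta>"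
  shows "lin_ext (tensor_map \<alpha> \<beta>) (k10bmul i j) = k10mul (tensor_map \<alpha> \<beta> i) (tensor_map \<alpha> \<beta> j)"
proof (cases i)
  case Unit
  then show ?thesis by (simp add: lin_ext_basisvec tensor_map_def k10mul_one_left)
next
  case i: (Ten a b)
  show ?thesis
  proof (cases j)
    case Unit
    then show ?thesis using i by (simp add: lin_ext_basisvec tensor_map_def k10mul_one_right)
  next
    case (Ten c d)
    then show ?thesis using i lin_ext_tensor_map_mul_Ten[OF \<alpha> \<beta>] by simp
  qed
qed

section \<open>\<open>2 \<times> 2\<close> matrices\<close>

text \<open>The matrix \<open>[[a, b], [c, d]]\<close> is the tuple \<open>(a, b, c, d)\<close>; its rows and columns are indexed
  by the odd basis vectors \<open>X\<close>, \<open>Y\<close> of K3.\<close>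
type_synonym 'a m2 = "'a \<times> 'a \<times> 'a \<times> 'a"

fun m2_entry :: "'a m2 \<Rightarrow> k3b \<Rightarrow> k3b \<Rightarrow> 'a::zero" where
  "m2_entry (a, b, c, d) p q =
     (if p = X \<and> q = X then a else if p = X \<and> q = Y then b
      else if p = Y \<and> q = X then c else if p = Y \<and> q = Y then d else 0)"

fun det2 :: "'a m2 \<Rightarrow> 'a::comm_ring" where
  "det2 (a, b, c, d) = a * d - b * c"

fun adj2 :: "'a m2 \<Rightarrow> 'a::comm_ring m2" where
  "adj2 (a, b, c, d) = (d, - b, - c, a)"

fun m2_mul :: "'a::comm_ring_1 m2 \<Rightarrow> 'a m2 \<Rightarrow> 'a m2" where
  "m2_mul (a, b, c, d) (e, f, g, h) = (a * e + b * g, a * f + b * h, c * e + d * g, c * f + d * h)"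

fun m2_add :: "'a::comm_ring_1 m2 \<Rightarrow> 'a m2 \<Rightarrow> 'a m2" where
  "m2_add (a, b, c, d) (e, f, g, h) = (a + e, b + f, c + g, d + h)"

fun m2_neg :: "'a::comm_ring_1 m2 \<Rightarrow> 'a m2" where
  "m2_neg (a, b, c, d) = (- a, - b, - c, - d)"

fun m2_transpose :: "'a m2 \<Rightarrow> 'a m2" where
  "m2_transpose (a, b, c, d) = (a, c, b, d)"

text \<open>The polarization of the determinant: \<open>det2_polar M N = det2 (M + N) - det2 M - det2 N\<close>.\<close>
fun det2_polar :: "'a::comm_ring_1 m2 \<Rightarrow> 'a m2 \<Rightarrow> 'a" where
  "det2_polar (a, b, c, d) (e, f, g, h) = a * h + d * e - b * g - c * f"

definition I2 :: "'a::comm_ring_1 m2" where "I2 = (1, 0, 0, 1)"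
definition E11 :: "'a::comm_ring_1 m2" where "E11 = (1, 0, 0, 0)"
definition E12 :: "'a::comm_ring_1 m2" where "E12 = (0, 1, 0, 0)"
definition E21 :: "'a::comm_ring_1 m2" where "E21 = (0, 0, 1, 0)"
definition E22 :: "'a::comm_ring_1 m2" where "E22 = (0, 0, 0, 1)"

lemma m2_mul_assoc: "m2_mul (m2_mul A B) C = m2_mul A (m2_mul B C)"
  by (cases A; cases B; cases C) (simp add: algebra_simps)

lemma m2_mul_I2: "m2_mul I2 A = A" "m2_mul A I2 = A"
  by (cases A; simp add: I2_def)+

lemma m2_mul_adj2: "det2 A = 1 \<Longrightarrow> m2_mul (adj2 A) A = I2" "det2 A = 1 \<Longrightarrow> m2_mul A (adj2 A) = I2"
  by (cases A; simp add: I2_def algebra_simps)+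

lemma m2_mul_add: "m2_mul A (m2_add M N) = m2_add (m2_mul A M) (m2_mul A N)"
  by (cases A; cases M; cases N) (simp add: algebra_simps)

lemma det2_m2_mul: "det2 (m2_mul A B) = det2 A * det2 B"
  by (cases A; cases B) (simp add: algebra_simps)

lemma det2_adj2: "det2 (adj2 M) = det2 M"
  by (cases M) (simp add: algebra_simps)

lemma adj2_adj2: "adj2 (adj2 M) = M"
  by (cases M) simp

lemma det2_m2_transpose: "det2 (m2_transpose A) = det2 A"
  by (cases A) (simp add: algebra_simps)

lemma det2_m2_neg: "det2 (m2_neg A) = det2 A"
  by (cases A) (simp add: algebra_simps)

lemma det2_polar_self: "det2_polar M M = 2 * det2 M"
  by (cases M) (simp add: algebra_simps)

lemma det2_polar_add_self:
  "det2_polar (m2_add M N) (m2_add M N) = det2_polar M M + 2 * det2_polar M N + det2_polar N N"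
  by (cases M; cases N) (simp add: algebra_simps)

lemma det2_polar_mul_left: "det2_polar (m2_mul A M) (m2_mul A N) = det2 A * det2_polar M N"
  by (cases A; cases M; cases N) (simp add: algebra_simps)

lemma det2_polar_mul_right: "det2_polar (m2_mul M B) (m2_mul N B) = det2 B * det2_polar M N"
  by (cases B; cases M; cases N) (simp add: algebra_simps)

section \<open>Automorphisms from \<open>SL\<^sub>2 \<times> SL\<^sub>2\<close>, the grading and the super-twist\<close>

definition sl2_k3 :: "'a m2 \<Rightarrow> k3b \<Rightarrow> k3b \<Rightarrow> 'a::field" where
  "sl2_k3 M a p = (if a = E \<and> p = E then 1 else if a = E \<or> p = E then 0 else m2_entry M a p)"

lemma k3_iso_aut_sl2_k3:
  assumes "det2 M = (1::'a::field)"
  shows "k3_iso_aut (sl2_k3 M)"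
proof -
  obtain m11 m12 m21 m22 where M: "M = (m11, m12, m21, m22)" by (cases M) auto
  have det: "m11 * m22 - m12 * m21 = 1" using assms M by simp
  have "(\<Sum>r\<in>UNIV. k3mul a c r * sl2_k3 M r q)
      = (\<Sum>p\<in>UNIV. \<Sum>p'\<in>UNIV. sl2_k3 M a p * sl2_k3 M c p' * k3mul p p' q)" for a c q
    using det by (cases a; cases c; cases q) (simp_all add: sum_UNIV_k3b sl2_k3_def M algebra_simps)
  moreover have "(\<Sum>p\<in>UNIV. \<Sum>p'\<in>UNIV. sl2_k3 M a p * sl2_k3 M c p' * k3form p p') = k3form a c" for a c
    using det by (cases a; cases c) (simp_all add: sum_UNIV_k3b sl2_k3_def M algebra_simps)
  ultimately show ?thesis
    by (auto simp: k3_iso_aut_def sl2_k3_def k3odd_def)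
qed

lemma tensor_map_sl2_inverse:
  assumes "det2 M = (1::'a::field)" "det2 N = 1"
  shows "lin_ext (tensor_map (sl2_k3 (adj2 M)) (sl2_k3 (adj2 N))) (tensor_map (sl2_k3 M) (sl2_k3 N) i)
       = basisvec i"
proof -
  obtain m11 m12 m21 m22 where M: "M = (m11, m12, m21, m22)" by (cases M) auto
  obtain n11 n12 n21 n22 where N: "N = (n11, n12, n21, n22)" by (cases N) auto
  have det: "m11 * m22 - m12 * m21 = 1" "n11 * n22 - n12 * n21 = 1" using assms M N by auto
  show ?thesis
  proof (cases i)
    case Unit
    then show ?thesis by (simp add: lin_ext_basisvec tensor_map_def)
  next
    case (Ten a b)
    then show ?thesis
      using det by (cases a; cases b; intro k10_eqI)
        (simp_all add: lin_ext_def sum_UNIV_k10b sum_UNIV_k3b tensor_map_def sl2_k3_def basisvec_def M N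
          algebra_simps)
  qed
qed

lemma sl2_pair_in_AutK10:
  assumes "det2 M = (1::'a::field)" "det2 N = 1"
  shows "lin_ext (tensor_map (sl2_k3 M) (sl2_k3 N)) \<in> AutK10"
proof (rule lin_ext_in_AutK10)
  have aut: "k3_iso_aut (sl2_k3 M)" "k3_iso_aut (sl2_k3 N)"
    using assms by (simp_all add: k3_iso_aut_sl2_k3)
  show "lin_ext (tensor_map (sl2_k3 M) (sl2_k3 N)) (k10bmul i j)
      = k10mul (tensor_map (sl2_k3 M) (sl2_k3 N) i) (tensor_map (sl2_k3 M) (sl2_k3 N) j)" for i j
    by (rule lin_ext_tensor_map_mul[OF aut])
  show "tensor_map (sl2_k3 M) (sl2_k3 N) i k \<noteq> 0 \<Longrightarrow> k10odd i = k10odd k" for i k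
    by (rule tensor_map_parity[OF aut])
  show "lin_ext (tensor_map (sl2_k3 (adj2 M)) (sl2_k3 (adj2 N))) (tensor_map (sl2_k3 M) (sl2_k3 N) i)
      = basisvec i" for i
    by (rule tensor_map_sl2_inverse[OF assms])
  show "lin_ext (tensor_map (sl2_k3 M) (sl2_k3 N)) (tensor_map (sl2_k3 (adj2 M)) (sl2_k3 (adj2 N)) i)
      = basisvec i" for i
    using tensor_map_sl2_inverse[of "adj2 M" "adj2 N" i] assms by (simp add: det2_adj2 adj2_adj2)
qed

text \<open>\<open>sl2_k3 (m2_neg I2)\<close> is the grading automorphism of K3.\<close>
lemma tauK10_eq_tensor_map: "tauK10 = lin_ext (tensor_map (sl2_k3 (m2_neg I2)) (sl2_k3 (m2_neg I2)))"
proof (intro ext)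
  fix u :: "'a::field k10" and k
  note defs = tauK10_def lin_ext_def sum_UNIV_k10b tensor_map_def sl2_k3_def basisvec_def I2_def
    k10odd_def k3odd_def
  show "tauK10 u k = lin_ext (tensor_map (sl2_k3 (m2_neg I2)) (sl2_k3 (m2_neg I2))) u k"
  proof (cases k)
    case (Ten p q) then show ?thesis by (cases p; cases q) (simp_all add: defs)
  qed (simp add: defs)
qed

lemma tauK10_in_AutK10: "tauK10 \<in> AutK10"
  unfolding tauK10_eq_tensor_map by (rule sl2_pair_in_AutK10) (simp_all add: I2_def)

definition twist_map :: "k10b \<Rightarrow> 'a::field k10" where
  "twist_map i = (case i of Unit \<Rightarrow> basisvec Unit | Ten a b \<Rightarrow> k10smul (k3sign a b) (basisvec (Ten b a)))"

lemma lin_ext_twist_map_mul: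
  "lin_ext twist_map (k10bmul i j) = k10mul (twist_map i) (twist_map j :: 'a::field k10)"
proof (cases i)
  case Unit
  then show ?thesis by (simp add: lin_ext_basisvec twist_map_def k10mul_one_left)
next
  case i: (Ten a b)
  show ?thesis
  proof (cases j)
    case Unit
    then show ?thesis using i by (simp add: lin_ext_basisvec twist_map_def k10mul_one_right)
  next
    case j: (Ten c d)
    have "k10mul (twist_map i) (twist_map j) = k10smul (k3sign a b * k3sign c d) (k10bmul (Ten b a) (Ten d c) :: 'a k10)"
      by (simp add: i j twist_map_def k10mul_smul_left k10mul_smul_right k10mul_basisvec)
        (simp add: k10smul_def mult_ac)
    moreover have "lin_ext twist_map (k10bmul i j) k
        = k10smul (k3sign a b * k3sign c d) (k10bmul (Ten b a) (Ten d c) :: 'a k10) k" for k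
    proof (cases k)
      case Unit
      then show ?thesis
        by (cases a; cases b; cases c; cases d)
          (simp_all add: i j lin_ext_def sum_UNIV_k10b twist_map_def k3sign_def basisvec_def k10smul_def k3odd_def)
    next
      case (Ten p q)
      then show ?thesis
        by (cases a; cases b; cases c; cases d; cases p; cases q)
          (simp_all add: i j lin_ext_def sum_UNIV_k10b twist_map_def k3sign_def basisvec_def k10smul_def k3odd_def)
    qed
    ultimately show ?thesis by auto
  qed
qed

lemma twist_map_involutive: "lin_ext twist_map (twist_map i) = basisvec i"
proof (cases i)
  case Unit
  then show ?thesis by (simp add: twist_map_def lin_ext_basisvec)
next
  case (Ten a b)
  then show ?thesis
    by (simp add: twist_map_def lin_ext_smul lin_ext_basisvec) (simp add: k10smul_def k3sign_def)
qed

lemma twist_in_AutK10: "lin_ext twist_map \<in> AutK10"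
proof (rule lin_ext_in_AutK10[where \<Psi> = twist_map])
  show "twist_map i k \<noteq> 0 \<Longrightarrow> k10odd i = k10odd k" for i k
    by (cases i; cases k) (auto simp: twist_map_def basisvec_def k10smul_def k10odd_def split: if_splits)
qed (simp_all add: lin_ext_twist_map_mul twist_map_involutive)

section \<open>Automorphisms preserve \<open>V\<close> and \<open>b\<close>\<close>

text \<open>In terms of \<open>e \<otimes> e\<close>: \<open>\<epsilon> = 2 e \<otimes> e - 1/2\<close> is the even idempotent annihilating \<open>V\<close>,
  and \<open>\<omega> = e \<otimes> e - 3/4\<close> spans \<open>V V\<close>.\<close>
definition epsilon :: "'a::field k10" where
  "epsilon = (\<lambda>k. if k = Unit then - 1/2 else if k = Ten E E then 2 else 0)"

definition omega :: "'a::field k10" where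
  "omega = (\<lambda>k. if k = Unit then - 3/4 else if k = Ten E E then 1 else 0)"

lemma epsilon_mul_even:
  assumes z: "z \<in> k10even_part" and c2: "(2::'a::field) \<noteq> 0"
  shows "k10mul epsilon z = k10smul (z Unit + 3/4 * z (Ten E E)) (epsilon :: 'a k10)"
proof -
  have z: "z (Ten E X) = 0" "z (Ten E Y) = 0" "z (Ten X E) = 0" "z (Ten Y E) = 0"
    using z by (simp_all add: k10even_part_iff)
  show ?thesis
    by (intro k10_eqI) (simp_all add: k10mul_def sum_UNIV_k10b epsilon_def k10smul_def k3odd_def basisvec_def
        z field_simps c2 numeral_Bit0_eq_0_iff[OF c2])
qed

lemma mul_Vspace:
  assumes "u \<in> Vspace" "w \<in> Vspace" and c2: "(2::'a::field) \<noteq> 0"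
  shows "k10mul u w = k10smul (- bV u w) (omega :: 'a k10)"
  using assms(1,2) unfolding Vspace_iff
  by (intro k10_eqI) (simp_all add: k10mul_def sum_UNIV_k10b omega_def k10smul_def bV_def k3odd_def
      field_simps c2 numeral_Bit0_eq_0_iff[OF c2])

lemma epsilon_idem:
  assumes c2: "(2::'a::field) \<noteq> 0"
  shows "k10mul epsilon epsilon = (epsilon :: 'a k10)"
proof -
  have "(epsilon :: 'a k10) \<in> k10even_part" by (simp add: k10even_part_iff epsilon_def)
  then show ?thesis
    by (simp add: epsilon_mul_even[OF _ c2])
      (simp add: epsilon_def k10smul_def fun_eq_iff field_simps numeral_Bit0_eq_0_iff[OF c2])
qed

text \<open>Here \<open>s' \<otimes> t'\<close> is the basis vector of \<open>V\<close> paired with \<open>s \<otimes> t\<close> by \<open>b\<close>; comparing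
  coordinates forces \<open>c = 0\<close>.\<close>
lemma even_mul_V_basis_eigen:
  fixes e :: "'a::field k10"
  assumes ev: "e \<in> k10even_part" and ne: "e \<noteq> (\<lambda>_. 0)" and c2: "(2::'a) \<noteq> 0"
    and eig: "k10mul e (basisvec (Ten s t)) = k10smul c e"
    and s: "s \<noteq> E" "s' \<noteq> E" "s' \<noteq> s" and t: "t \<noteq> E" "t' \<noteq> E" "t' \<noteq> t"
  shows "e (Ten s' t') = 0 \<and> e Unit + e (Ten E E) / 4 = 0"
proof -
  have z: "e (Ten E X) = 0" "e (Ten E Y) = 0" "e (Ten X E) = 0" "e (Ten Y E) = 0"
    using ev by (simp_all add: k10even_part_iff)
  have nz: "e Unit \<noteq> 0 \<or> e (Ten E E) \<noteq> 0 \<or> e (Ten X X) \<noteq> 0 \<or> e (Ten X Y) \<noteq> 0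
      \<or> e (Ten Y X) \<noteq> 0 \<or> e (Ten Y Y) \<noteq> 0"
  proof (rule ccontr)
    assume "\<not> ?thesis"
    then have "e = (\<lambda>_. 0)" using z by (intro k10_eqI) simp_all
    with ne show False ..
  qed
  have "k10mul e (basisvec (Ten s t)) k = c * e k" for k
    using eig by (simp add: k10smul_def)
  note h = this[of Unit] this[of "Ten E E"] this[of "Ten X X"] this[of "Ten X Y"] this[of "Ten Y X"] this[of "Ten Y Y"]
  from s t consider "s = X" "t = X" "s' = Y" "t' = Y" | "s = X" "t = Y" "s' = Y" "t' = X"
    | "s = Y" "t = X" "s' = X" "t' = Y" | "s = Y" "t = Y" "s' = X" "t' = X"
    by (cases s; cases t; cases s'; cases t') simp_all
  then show ?thesis
  proof cases
    case 1
    note h2 = h[unfolded 1 k10mul_basisvec_right sum_UNIV_k10b, simplified, simplified k3odd_def basisvec_def, simplified]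
    show ?thesis using 1 h2 z nz c2 by (cases "c = 0") (auto simp: field_simps numeral_Bit0_eq_0_iff[OF c2])
  next
    case 2
    note h2 = h[unfolded 2 k10mul_basisvec_right sum_UNIV_k10b, simplified, simplified k3odd_def basisvec_def, simplified]
    show ?thesis using 2 h2 z nz c2 by (cases "c = 0") (auto simp: field_simps numeral_Bit0_eq_0_iff[OF c2])
  next
    case 3
    note h2 = h[unfolded 3 k10mul_basisvec_right sum_UNIV_k10b, simplified, simplified k3odd_def basisvec_def, simplified]
    show ?thesis using 3 h2 z nz c2 by (cases "c = 0") (auto simp: field_simps numeral_Bit0_eq_0_iff[OF c2])
  next
    case 4
    note h2 = h[unfolded 4 k10mul_basisvec_right sum_UNIV_k10b, simplified, simplified k3odd_def basisvec_def, simplified]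
    show ?thesis using 4 h2 z nz c2 by (cases "c = 0") (auto simp: field_simps numeral_Bit0_eq_0_iff[OF c2])
  qed
qed

lemma even_idem_eq_epsilon:
  fixes e :: "'a::field k10"
  assumes ev: "e \<in> k10even_part" and ne: "e \<noteq> (\<lambda>_. 0)" and idem: "k10mul e e = e"
    and c2: "(2::'a) \<noteq> 0"
    and eig: "\<And>s t. s \<noteq> E \<Longrightarrow> t \<noteq> E \<Longrightarrow> \<exists>c. k10mul e (basisvec (Ten s t)) = k10smul c e"
  shows "e = epsilon"
proof -
  have z: "e (Ten E X) = 0" "e (Ten E Y) = 0" "e (Ten X E) = 0" "e (Ten Y E) = 0"
    using ev by (simp_all add: k10even_part_iff)
  have coords: "e (Ten s' t') = 0 \<and> e Unit + e (Ten E E) / 4 = 0"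
    if "s \<noteq> E" "s' \<noteq> E" "s' \<noteq> s" "t \<noteq> E" "t' \<noteq> E" "t' \<noteq> t" for s t s' t'
    using eig[of s t] even_mul_V_basis_eigen[OF ev ne c2 _ that] that by blast
  have v: "e (Ten X X) = 0" "e (Ten X Y) = 0" "e (Ten Y X) = 0" "e (Ten Y Y) = 0"
    and ab: "e Unit + e (Ten E E) / 4 = 0"
    using coords[of Y X Y X] coords[of Y X X Y] coords[of X Y Y X] coords[of X Y X Y] by simp_all
  have a: "e Unit = - e (Ten E E) / 4"
    using ab by (simp add: field_simps numeral_Bit0_eq_0_iff[OF c2] eq_neg_iff_add_eq_0 add.commute)
  have "e (Ten E E) \<noteq> 0"
  proof
    assume "e (Ten E E) = 0"
    then have "e = (\<lambda>_. 0)" using a z v by (intro k10_eqI) simp_all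
    with ne show False ..
  qed
  moreover have "2 * e Unit * e (Ten E E) + e (Ten E E) * e (Ten E E) = e (Ten E E)"
    using fun_cong[OF idem, of "Ten E E"]
    by (simp add: k10mul_def sum_UNIV_k10b z v k3odd_def basisvec_def algebra_simps)
  ultimately have "2 * e (Ten E E) = 2 * 2"
    using a c2 by (simp add: field_simps numeral_Bit0_eq_0_iff[OF c2])
  then have "e (Ten E E) = 2"
    using c2 by (metis mult_left_cancel)
  with a show ?thesis
    using z v c2 by (intro k10_eqI) (simp_all add: epsilon_def numeral_Bit0_eq_0_iff[OF c2])
qed

lemma AutK10_epsilon:
  fixes \<phi> :: "'a::field k10 \<Rightarrow> 'a k10"
  assumes A: "\<phi> \<in> AutK10" and c2: "(2::'a) \<noteq> 0"
  shows "\<phi> epsilon = epsilon"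
proof (rule even_idem_eq_epsilon[OF _ _ _ c2])
  have "epsilon \<in> k10even_part" by (simp add: k10even_part_iff epsilon_def)
  then show "\<phi> epsilon \<in> k10even_part" by (rule AutK10_even[OF A])
  show "\<phi> epsilon \<noteq> (\<lambda>_. 0)"
  proof
    assume "\<phi> epsilon = (\<lambda>_. 0)"
    then have "epsilon = (\<lambda>_. 0 :: 'a)"
      using AutK10_zero[OF A] AutK10_inj[OF A] by metis
    then have "epsilon (Ten E E) = (0::'a)" by metis
    with c2 show False by (simp add: epsilon_def)
  qed
  show "k10mul (\<phi> epsilon) (\<phi> epsilon) = \<phi> epsilon"
    by (simp add: AutK10_mul[OF A, symmetric] epsilon_idem[OF c2])
  fix s t :: k3b assume "s \<noteq> E" "t \<noteq> E"
  then have "basisvec (Ten s t) \<in> k10even_part"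
    by (simp add: k10even_part_iff basisvec_def)
  then obtain z where z: "z \<in> k10even_part" "\<phi> z = basisvec (Ten s t)"
    using AutK10_even_reflect[OF A] AutK10_bij[OF A] by (metis bij_pointE)
  have "k10mul (\<phi> epsilon) (basisvec (Ten s t)) = \<phi> (k10smul (z Unit + 3/4 * z (Ten E E)) epsilon)"
    by (simp add: z(2)[symmetric] AutK10_mul[OF A, symmetric] epsilon_mul_even[OF z(1) c2])
  then show "\<exists>c. k10mul (\<phi> epsilon) (basisvec (Ten s t)) = k10smul c (\<phi> epsilon)"
    by (auto simp: AutK10_smul[OF A])
qed

lemma AutK10_ee:
  assumes A: "\<phi> \<in> AutK10" and c2: "(2::'a::field) \<noteq> 0"
  shows "\<phi> (basisvec (Ten E E)) = (basisvec (Ten E E) :: 'a k10)"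
proof -
  have "basisvec (Ten E E) = k10smul (1/2) (k10add epsilon (k10smul (1/2) (basisvec Unit :: 'a k10)))"
    using c2 by (intro k10_eqI) (simp_all add: basisvec_def epsilon_def k10smul_def k10add_def)
  then show ?thesis
    by (metis AutK10_add[OF A] AutK10_smul[OF A] AutK10_epsilon[OF A c2] AutK10_one[OF A])
qed

lemma AutK10_omega:
  assumes A: "\<phi> \<in> AutK10" and c2: "(2::'a::field) \<noteq> 0"
  shows "\<phi> omega = (omega :: 'a k10)"
proof -
  have "omega = k10add (basisvec (Ten E E)) (k10smul (- 3/4) (basisvec Unit :: 'a k10))"
    by (intro k10_eqI) (simp_all add: basisvec_def omega_def k10smul_def k10add_def)
  then show ?thesis
    by (metis AutK10_add[OF A] AutK10_smul[OF A] AutK10_ee[OF A c2] AutK10_one[OF A])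
qed

lemma epsilon_mul_even_eq_0_iff:
  fixes z :: "'a::field k10"
  assumes z: "z \<in> k10even_part" and c2: "(2::'a) \<noteq> 0"
  shows "k10mul epsilon z = (\<lambda>_. 0) \<longleftrightarrow> z Unit + 3/4 * z (Ten E E) = 0"
proof -
  have "(epsilon :: 'a k10) Unit \<noteq> 0"
    using c2 by (simp add: epsilon_def)
  then show ?thesis
    by (auto simp: epsilon_mul_even[OF z c2] k10smul_def fun_eq_iff)
qed

text \<open>On the annihilator \<open>F \<omega> \<oplus> V\<close> of \<open>\<epsilon>\<close>, \<open>\<omega>\<close> acts on \<open>V\<close> by \<open>-1/2\<close>, so the
  \<open>V\<close>-component of \<open>(\<lambda> \<omega> + w)\<^sup>2\<close> is \<open>-\<lambda> w\<close>.\<close>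
lemma epsilon_annihilator_square:
  fixes z :: "'a::field k10"
  assumes z: "z \<in> k10even_part" and ann: "z Unit + 3/4 * z (Ten E E) = 0"
    and sq: "k10mul z z = k10smul c omega" and st: "s \<noteq> E" "t \<noteq> E" and c2: "(2::'a) \<noteq> 0"
  shows "z (Ten E E) * z (Ten s t) = 0"
proof -
  have odd0: "z (Ten E X) = 0" "z (Ten E Y) = 0" "z (Ten X E) = 0" "z (Ten Y E) = 0"
    using z by (simp_all add: k10even_part_iff)
  have zU: "z Unit = - 3/4 * z (Ten E E)"
    using ann by (simp add: eq_neg_iff_add_eq_0)
  have "k10mul z z (Ten s t) = - (z (Ten E E) * z (Ten s t))"
    using st odd0
    by (cases s; cases t) (simp_all add: zU k10mul_def sum_UNIV_k10b k3odd_def basisvec_def field_simps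
        numeral_Bit0_eq_0_iff[OF c2])
  moreover have "k10mul z z (Ten s t) = 0"
    using sq st by (simp add: k10smul_def omega_def)
  ultimately show ?thesis by simp
qed

lemma AutK10_Vspace:
  fixes \<phi> :: "'a::field k10 \<Rightarrow> 'a k10"
  assumes A: "\<phi> \<in> AutK10" and c2: "(2::'a) \<noteq> 0" and v: "v \<in> Vspace"
  shows "\<phi> v \<in> Vspace"
proof -
  define z where "z = \<phi> v"
  have v_even: "v \<in> k10even_part" by (rule Vspace_subset_even[OF v])
  then have z_even: "z \<in> k10even_part" by (simp add: z_def AutK10_even[OF A])
  have "k10mul epsilon z = \<phi> (k10mul epsilon v)"
    by (simp add: z_def AutK10_mul[OF A] AutK10_epsilon[OF A c2])
  also have "k10mul epsilon v = (\<lambda>_. 0)"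
    using v by (simp add: epsilon_mul_even_eq_0_iff[OF v_even c2] Vspace_iff)
  finally have "k10mul epsilon z = (\<lambda>_. 0)"
    by (simp add: AutK10_zero[OF A])
  then have ann: "z Unit + 3/4 * z (Ten E E) = 0"
    by (simp add: epsilon_mul_even_eq_0_iff[OF z_even c2])
  have "k10mul z z = k10smul (- bV v v) omega"
    by (simp add: z_def AutK10_mul[OF A, symmetric] mul_Vspace[OF v v c2] AutK10_smul[OF A] AutK10_omega[OF A c2])
  note square = epsilon_annihilator_square[OF z_even ann this _ _ c2]
  have "z (Ten E E) = 0"
  proof (rule ccontr)
    assume ee: "z (Ten E E) \<noteq> 0"
    have "z (Ten s t) = 0" if "s \<noteq> E" "t \<noteq> E" for s t
      using square[OF that] ee by simp
    moreover have "z Unit = - 3/4 * z (Ten E E)"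
      using ann by (simp add: eq_neg_iff_add_eq_0)
    ultimately have "z = k10smul (z (Ten E E)) omega"
      using z_even by (intro k10_eqI) (simp_all add: k10even_part_iff k10smul_def omega_def)
    then have "\<phi> v = \<phi> (k10smul (z (Ten E E)) omega)"
      using AutK10_smul[OF A] AutK10_omega[OF A c2] z_def by metis
    then have "v = k10smul (z (Ten E E)) omega"
      by (rule AutK10_inj[OF A])
    then show False
      using v ee by (simp add: Vspace_iff k10smul_def omega_def)
  qed
  with z_even ann show ?thesis
    by (simp add: z_def k10even_part_iff Vspace_iff)
qed

lemma AutK10_in_OVb:
  fixes \<phi> :: "'a::field k10 \<Rightarrow> 'a k10"
  assumes A: "\<phi> \<in> AutK10" and c2: "(2::'a) \<noteq> 0"
  shows "\<phi> \<in> OVb"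
proof -
  have "inj_on \<phi> Vspace"
    using AutK10_bij[OF A] by (metis bij_is_inj inj_on_subset subset_UNIV)
  moreover have "\<phi> ` Vspace = Vspace"
  proof
    show "\<phi> ` Vspace \<subseteq> Vspace" using AutK10_Vspace[OF A c2] by blast
    show "Vspace \<subseteq> \<phi> ` Vspace"
    proof
      fix v :: "'a k10" assume "v \<in> Vspace"
      then have "inv \<phi> v \<in> Vspace" by (rule AutK10_Vspace[OF AutK10_inv[OF A] c2])
      moreover have "\<phi> (inv \<phi> v) = v"
        using AutK10_bij[OF A] by (simp add: bij_is_surj surj_f_inv_f)
      ultimately show "v \<in> \<phi> ` Vspace" by (metis image_eqI)
    qed
  qed
  moreover have "bV (\<phi> u) (\<phi> w) = bV u w" if u: "u \<in> Vspace" and w: "w \<in> Vspace" for u w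
  proof -
    have "k10smul (- bV (\<phi> u) (\<phi> w)) omega = k10smul (- bV u w) (omega :: 'a k10)"
      by (simp add: mul_Vspace[OF AutK10_Vspace[OF A c2 u] AutK10_Vspace[OF A c2 w] c2, symmetric]
          AutK10_mul[OF A, symmetric] mul_Vspace[OF u w c2] AutK10_smul[OF A] AutK10_omega[OF A c2])
    then have "k10smul (- bV (\<phi> u) (\<phi> w)) omega (Ten E E) = k10smul (- bV u w) (omega :: 'a k10) (Ten E E)"
      by simp
    then show ?thesis by (simp add: k10smul_def omega_def)
  qed
  ultimately show ?thesis
    by (simp add: OVb_def bij_betw_def AutK10_add[OF A] AutK10_smul[OF A])
qed

section \<open>Automorphisms fixing \<open>V\<close> pointwise\<close>

lemma k10bmul_V_odd:
  "k10bmul (Ten X X) (Ten E X) = (\<lambda>_. 0)" "k10bmul (Ten Y X) (Ten E X) = (\<lambda>_. 0)"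
  "k10bmul (Ten X Y) (Ten E Y) = (\<lambda>_. 0)" "k10bmul (Ten Y Y) (Ten E Y) = (\<lambda>_. 0)"
  "k10bmul (Ten X X) (Ten E Y) = k10smul (1/2) (basisvec (Ten X E))"
  "k10bmul (Ten Y X) (Ten E Y) = k10smul (1/2) (basisvec (Ten Y E))"
  "k10bmul (Ten Y Y) (Ten E X) = k10smul (- 1/2) (basisvec (Ten Y E) :: 'a::field k10)"
  by (rule k10_eqI; simp add: k10smul_def basisvec_def k3odd_def)+

text \<open>These are the relations satisfied by \<open>e \<otimes> x, e \<otimes> y, x \<otimes> e, y \<otimes> e\<close>
  (\<open>k10bmul_V_odd\<close>); the odd part is an irreducible module for multiplication by \<open>V\<close>, and its
  endomorphisms are scalars.\<close>
lemma odd_V_relations_scalar: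
  fixes p1 p2 p3 p4 :: "'a::field k10"
  assumes odd: "p1 \<in> k10odd_part" "p2 \<in> k10odd_part" "p3 \<in> k10odd_part" "p4 \<in> k10odd_part"
    and c2: "(2::'a) \<noteq> 0"
    and rel: "k10mul (basisvec (Ten X X)) p1 = (\<lambda>_. 0)" "k10mul (basisvec (Ten Y X)) p1 = (\<lambda>_. 0)"
      "k10mul (basisvec (Ten X Y)) p2 = (\<lambda>_. 0)" "k10mul (basisvec (Ten Y Y)) p2 = (\<lambda>_. 0)"
      "k10mul (basisvec (Ten X X)) p2 = k10smul (1/2) p3" "k10mul (basisvec (Ten Y X)) p2 = k10smul (1/2) p4"
      "k10mul (basisvec (Ten Y Y)) p1 = k10smul (- 1/2) p4"
  shows "\<exists>l. p1 = k10smul l (basisvec (Ten E X)) \<and> p2 = k10smul l (basisvec (Ten E Y))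
           \<and> p3 = k10smul l (basisvec (Ten X E)) \<and> p4 = k10smul l (basisvec (Ten Y E))"
proof -
  note rel = rel[THEN fun_cong, unfolded k10mul_basisvec_left]
  note S = sum_UNIV_k10b k3odd_def k10smul_def basisvec_def odd[unfolded k10odd_part_iff] c2
  define l where "l = p1 (Ten E X)"
  have "p1 (Ten E Y) = 0" "p1 (Ten Y E) = 0" "p1 (Ten X E) = 0"
    using rel(1)[of "Ten X E"] rel(1)[of "Ten E X"] rel(2)[of "Ten E X"] by (simp_all add: S)
  moreover have "p2 (Ten E X) = 0" "p2 (Ten Y E) = 0" "p2 (Ten X E) = 0"
    using rel(3)[of "Ten X E"] rel(3)[of "Ten E Y"] rel(4)[of "Ten E Y"] by (simp_all add: S)
  moreover note calculation
  moreover have "p3 (Ten X E) = p2 (Ten E Y)" "p3 (Ten E X) = 0" "p3 (Ten E Y) = 0" "p3 (Ten Y E) = 0"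
    using rel(5)[of "Ten X E"] rel(5)[of "Ten E X"] rel(5)[of "Ten E Y"] rel(5)[of "Ten Y E"] calculation
    by (simp_all add: S)
  moreover have "p4 (Ten Y E) = p2 (Ten E Y)" "p4 (Ten E X) = 0" "p4 (Ten E Y) = 0" "p4 (Ten X E) = 0"
    using rel(6)[of "Ten Y E"] rel(6)[of "Ten E X"] rel(6)[of "Ten E Y"] rel(6)[of "Ten X E"] calculation
    by (simp_all add: S)
  moreover have "p4 (Ten Y E) = l"
    using rel(7)[of "Ten Y E"] calculation by (simp add: S l_def)
  ultimately show ?thesis
    using odd by (intro exI[of _ l] conjI k10_eqI) (simp_all add: k10odd_part_iff k10smul_def basisvec_def l_def)
qed

lemma AutK10_fix_Vspace_odd:
  fixes \<phi> :: "'a::field k10 \<Rightarrow> 'a k10"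
  assumes A: "\<phi> \<in> AutK10" and c2: "(2::'a) \<noteq> 0" and fixV: "\<forall>v\<in>Vspace. \<phi> v = v"
  shows "\<exists>l. \<phi> (basisvec (Ten E X)) = k10smul l (basisvec (Ten E X))
           \<and> \<phi> (basisvec (Ten E Y)) = k10smul l (basisvec (Ten E Y))
           \<and> \<phi> (basisvec (Ten X E)) = k10smul l (basisvec (Ten X E))
           \<and> \<phi> (basisvec (Ten Y E)) = k10smul l (basisvec (Ten Y E))"
proof (rule odd_V_relations_scalar[OF _ _ _ _ c2])
  have comm: "\<phi> (k10bmul (Ten s t) j) = k10mul (basisvec (Ten s t)) (\<phi> (basisvec j))"
    if "s \<noteq> E" "t \<noteq> E" for s t j
  proof -
    have "\<phi> (basisvec (Ten s t)) = basisvec (Ten s t)"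
      using fixV that by (simp add: Vspace_iff basisvec_def)
    then show ?thesis
      using AutK10_mul[OF A, of "basisvec (Ten s t)" "basisvec j"] by (simp add: k10mul_basisvec)
  qed
  note simps = AutK10_zero[OF A] AutK10_smul[OF A]
  show "k10mul (basisvec (Ten X X)) (\<phi> (basisvec (Ten E X))) = (\<lambda>_. 0)"
    using comm[of X X "Ten E X", unfolded k10bmul_V_odd] by (simp add: simps)
  show "k10mul (basisvec (Ten Y X)) (\<phi> (basisvec (Ten E X))) = (\<lambda>_. 0)"
    using comm[of Y X "Ten E X", unfolded k10bmul_V_odd] by (simp add: simps)
  show "k10mul (basisvec (Ten X Y)) (\<phi> (basisvec (Ten E Y))) = (\<lambda>_. 0)"
    using comm[of X Y "Ten E Y", unfolded k10bmul_V_odd] by (simp add: simps)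
  show "k10mul (basisvec (Ten Y Y)) (\<phi> (basisvec (Ten E Y))) = (\<lambda>_. 0)"
    using comm[of Y Y "Ten E Y", unfolded k10bmul_V_odd] by (simp add: simps)
  show "k10mul (basisvec (Ten X X)) (\<phi> (basisvec (Ten E Y))) = k10smul (1/2) (\<phi> (basisvec (Ten X E)))"
    using comm[of X X "Ten E Y", unfolded k10bmul_V_odd] by (simp add: simps)
  show "k10mul (basisvec (Ten Y X)) (\<phi> (basisvec (Ten E Y))) = k10smul (1/2) (\<phi> (basisvec (Ten Y E)))"
    using comm[of Y X "Ten E Y", unfolded k10bmul_V_odd] by (simp add: simps)
  show "k10mul (basisvec (Ten Y Y)) (\<phi> (basisvec (Ten E X))) = k10smul (- 1/2) (\<phi> (basisvec (Ten Y E)))"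
    using comm[of Y Y "Ten E X", unfolded k10bmul_V_odd] by (simp add: simps)
qed (use AutK10_odd[OF A] in \<open>simp_all add: k10odd_part_iff basisvec_def\<close>)

lemma tauK10_basisvec: "tauK10 (basisvec i) = k10smul (if k10odd i then - 1 else 1) (basisvec i)"
  by (simp add: tauK10_def k10smul_def basisvec_def fun_eq_iff)

lemma AutK10_fix_Vspace_basis:
  fixes \<phi> :: "'a::field k10 \<Rightarrow> 'a k10"
  assumes A: "\<phi> \<in> AutK10" and c2: "(2::'a) \<noteq> 0" and fixV: "\<forall>v\<in>Vspace. \<phi> v = v"
  obtains l where "l = 1 \<or> l = - 1"
    and "\<And>i. \<phi> (basisvec i) = k10smul (if k10odd i then l else 1) (basisvec i)"
proof -
  obtain l where l: "\<phi> (basisvec (Ten E X)) = k10smul l (basisvec (Ten E X))"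
    "\<phi> (basisvec (Ten E Y)) = k10smul l (basisvec (Ten E Y))"
    "\<phi> (basisvec (Ten X E)) = k10smul l (basisvec (Ten X E))"
    "\<phi> (basisvec (Ten Y E)) = k10smul l (basisvec (Ten Y E))"
    using AutK10_fix_Vspace_odd[OF A c2 fixV] by blast
  define exy :: "'a k10" where "exy = k10bmul (Ten E X) (Ten E Y)"
  have "exy = k10add (basisvec (Ten E E)) (k10smul (- 3/8) (basisvec Unit))"
    by (unfold exy_def, rule k10_eqI) (simp_all add: k10smul_def k10add_def basisvec_def k3odd_def)
  then have "\<phi> exy = exy"
    by (simp add: AutK10_add[OF A] AutK10_smul[OF A] AutK10_ee[OF A c2] AutK10_one[OF A])
  moreover have "\<phi> exy = k10smul (l * l) exy"
    by (simp add: exy_def k10mul_basisvec[symmetric] AutK10_mul[OF A] l k10mul_smul_left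
        k10mul_smul_right k10smul_k10smul)
  ultimately have "k10smul (l * l) exy (Ten E E) = exy (Ten E E)"
    by simp
  then have "l * l = 1"
    by (simp add: exy_def k10smul_def k3odd_def)
  then have "l = 1 \<or> l = - 1"
    by (metis square_eq_1_iff)
  moreover have "\<phi> (basisvec i) = k10smul (if k10odd i then l else 1) (basisvec i)" for i
  proof (cases i)
    case Unit then show ?thesis by (simp add: AutK10_one[OF A] k10smul_def k10odd_def)
  next
    case (Ten s t)
    show ?thesis
      using fixV l AutK10_ee[OF A c2]
      by (cases s; cases t) (simp_all add: Ten Vspace_iff basisvec_def k10smul_def k10odd_def k3odd_def)
  qed
  ultimately show ?thesis by (rule that)
qed

lemma AutK10_fix_Vspace:
  fixes \<phi> :: "'a::field k10 \<Rightarrow> 'a k10"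
  assumes A: "\<phi> \<in> AutK10" and c2: "(2::'a) \<noteq> 0" and fixV: "\<forall>v\<in>Vspace. \<phi> v = v"
  shows "\<phi> = id \<or> \<phi> = tauK10"
proof -
  obtain l where l: "l = 1 \<or> l = - 1"
    and basis: "\<And>i. \<phi> (basisvec i) = k10smul (if k10odd i then l else 1) (basisvec i)"
    using AutK10_fix_Vspace_basis[OF A c2 fixV] by blast
  from l show ?thesis
  proof
    assume "l = 1"
    then have "\<phi> = id"
      by (intro AutK10_eqI[OF A id_in_AutK10]) (simp add: basis k10smul_def)
    then show ?thesis ..
  next
    assume "l = - 1"
    then have "\<phi> = tauK10"
      by (intro AutK10_eqI[OF A tauK10_in_AutK10]) (simp add: basis tauK10_basisvec)
    then show ?thesis ..
  qed
qed

section \<open>Isometries of the determinant form\<close>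

definition m2_conj :: "'a::comm_ring_1 m2 \<Rightarrow> 'a m2 \<Rightarrow> 'a m2" where
  "m2_conj C M = m2_mul (m2_mul C M) (adj2 C)"

lemma adj2_m2_mul: "adj2 (m2_mul A B) = m2_mul (adj2 B) (adj2 A)"
  by (cases A; cases B) (simp add: algebra_simps)

lemma m2_conj_m2_conj: "m2_conj C (m2_conj D M) = m2_conj (m2_mul C D) M"
  by (simp add: m2_conj_def adj2_m2_mul m2_mul_assoc)

lemma m2_conj_adj2_cancel: "det2 C = 1 \<Longrightarrow> m2_conj C (m2_conj (adj2 C) M) = M"
  by (simp add: m2_conj_def adj2_adj2 m2_mul_assoc m2_mul_adj2 m2_mul_I2 flip: m2_mul_assoc[of C "adj2 C"])

lemma m2_conj_cancel: "det2 C = 1 \<Longrightarrow> m2_conj (adj2 C) (m2_conj C M) = M"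
  using m2_conj_adj2_cancel[of "adj2 C" M] by (simp add: det2_adj2 adj2_adj2)

lemma m2_conj_I2: "det2 C = 1 \<Longrightarrow> m2_conj C I2 = I2"
  by (simp add: m2_conj_def m2_mul_I2 m2_mul_adj2)

lemma m2_conj_add: "m2_conj C (m2_add M N) = m2_add (m2_conj C M) (m2_conj C N)"
  by (cases C; cases M; cases N) (simp add: m2_conj_def algebra_simps)

lemma m2_conj_diag:
  "s \<noteq> 0 \<Longrightarrow> m2_conj (s, 0, 0, 1 / s) (a, b, c, d) = (a, s * s * b, c / (s * s), (d :: 'a::field))"
  by (simp add: m2_conj_def field_simps)

text \<open>The relations satisfied by the images of the matrix units \<open>E11, E12, E21, E22\<close> under a linear
  isometry of \<open>(M2, det2_polar)\<close>.\<close>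
definition unit_frame :: "'a::comm_ring_1 m2 \<Rightarrow> 'a m2 \<Rightarrow> 'a m2 \<Rightarrow> 'a m2 \<Rightarrow> bool" where
  "unit_frame G11 G12 G21 G22 \<longleftrightarrow>
     det2_polar G11 G11 = 0 \<and> det2_polar G11 G12 = 0 \<and> det2_polar G11 G21 = 0 \<and> det2_polar G11 G22 = 1 \<and>
     det2_polar G12 G12 = 0 \<and> det2_polar G12 G21 = -1 \<and> det2_polar G12 G22 = 0 \<and>
     det2_polar G21 G21 = 0 \<and> det2_polar G21 G22 = 0 \<and> det2_polar G22 G22 = 0"

lemma unit_frame_mul_left:
  "det2 A = 1 \<Longrightarrow> unit_frame G11 G12 G21 G22
    \<Longrightarrow> unit_frame (m2_mul A G11) (m2_mul A G12) (m2_mul A G21) (m2_mul A G22)"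
  by (simp add: unit_frame_def det2_polar_mul_left)

lemma unit_frame_mul_right:
  "det2 B = 1 \<Longrightarrow> unit_frame G11 G12 G21 G22
    \<Longrightarrow> unit_frame (m2_mul G11 B) (m2_mul G12 B) (m2_mul G21 B) (m2_mul G22 B)"
  by (simp add: unit_frame_def det2_polar_mul_right)

lemma unit_frame_conj:
  "det2 C = 1 \<Longrightarrow> unit_frame G11 G12 G21 G22
    \<Longrightarrow> unit_frame (m2_conj C G11) (m2_conj C G12) (m2_conj C G21) (m2_conj C G22)"
  unfolding m2_conj_def by (rule unit_frame_mul_right[OF _ unit_frame_mul_left]) (simp_all add: det2_adj2)

lemma singular_trace_one_conj:
  fixes h1 :: "'a::field"
  assumes det: "det2 (h1, h2, h3, h4) = 0" and trace: "h1 + h4 = 1"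
  shows "\<exists>C. det2 C = 1 \<and> m2_conj C E11 = (h1, h2, h3, h4)"
proof -
  have h4: "h4 = 1 - h1" using trace by (simp add: eq_diff_eq add.commute)
  have d: "h1 * (1 - h1) = h2 * h3" using det h4 by (simp add: algebra_simps)
  consider "h2 \<noteq> 0" | "h2 = 0" "h1 = 1" | "h2 = 0" "h1 = 0"
    using d by force
  then show ?thesis
  proof cases
    case 1
    then show ?thesis using d h4
      by (intro exI[of _ "(h2, -1, 1 - h1, h1 / h2)"]) (simp add: m2_conj_def E11_def field_simps)
  next
    case 2
    then show ?thesis using h4
      by (intro exI[of _ "(1, 0, h3, 1)"]) (simp add: m2_conj_def E11_def)
  next
    case 3
    then show ?thesis using h4
      by (intro exI[of _ "(0, -1, 1, h3)"]) (simp add: m2_conj_def E11_def)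
  qed
qed

lemma unit_frame_diag_normalize:
  fixes K12 K21 :: "'a::field m2"
  assumes R: "unit_frame E11 K12 K21 E22" and sq: "\<forall>a::'a. \<exists>b. b ^ 2 = a" and c2: "(2::'a) \<noteq> 0"
  shows "\<exists>D. det2 D = 1 \<and> m2_conj D E11 = E11 \<and> m2_conj D E22 = E22 \<and>
     (K12 = m2_conj D E12 \<and> K21 = m2_conj D E21 \<or> K12 = m2_conj D E21 \<and> K21 = m2_conj D E12)"
proof -
  obtain a b c d where K12: "K12 = (a, b, c, d)" by (cases K12) auto
  obtain a' b' c' d' where K21: "K21 = (a', b', c', d')" by (cases K21) auto
  have eqs: "a = 0" "d = 0" "a' = 0" "d' = 0" "b * c = 0" "b' * c' = 0" "b * c' + c * b' = 1"
    using R c2 by (auto simp: unit_frame_def K12 K21 E11_def E22_def algebra_simps)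
  have diag: "det2 (s, 0, 0, 1 / s) = 1" "m2_conj (s, 0, 0, 1 / s) E11 = E11" "m2_conj (s, 0, 0, 1 / s) E22 = E22"
    if "s \<noteq> 0" for s :: 'a
    using that by (simp_all add: m2_conj_diag E11_def E22_def)
  show ?thesis
  proof (cases "b = 0")
    case False
    with eqs have "c = 0" "b' = 0" "c' = 1 / b" by (auto simp: field_simps)
    obtain s where "s ^ 2 = b" using sq by blast
    with False have s: "s \<noteq> 0" "s * s = b" by (auto simp: power2_eq_square)
    have "K12 = m2_conj (s, 0, 0, 1 / s) E12" "K21 = m2_conj (s, 0, 0, 1 / s) E21"
      using eqs \<open>c = 0\<close> \<open>b' = 0\<close> \<open>c' = 1 / b\<close> s
      by (simp_all add: K12 K21 m2_conj_diag E12_def E21_def)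
    then show ?thesis using diag[OF s(1)] by blast
  next
    case True
    with eqs have "c \<noteq> 0" by auto
    with eqs True have "b' = 1 / c" "c' = 0" by (auto simp: field_simps)
    obtain s where "s ^ 2 = 1 / c" using sq by blast
    with \<open>c \<noteq> 0\<close> have s: "s \<noteq> 0" "s * s = 1 / c" "1 / (s * s) = c"
      by (auto simp: power2_eq_square)
    have "K12 = m2_conj (s, 0, 0, 1 / s) E21" "K21 = m2_conj (s, 0, 0, 1 / s) E12"
      using eqs True \<open>b' = 1 / c\<close> \<open>c' = 0\<close> s
      by (simp_all add: K12 K21 m2_conj_diag E12_def E21_def)
    then show ?thesis using diag[OF s(1)] by blast
  qed
qed

lemma unit_frame_sum_I2_conj:
  fixes H11 H12 H21 H22 :: "'a::field m2"
  assumes R: "unit_frame H11 H12 H21 H22" and sum: "m2_add H11 H22 = I2" and c2: "(2::'a) \<noteq> 0"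
  shows "\<exists>C. det2 C = 1 \<and> m2_conj C E11 = H11 \<and> m2_conj C E22 = H22"
proof -
  obtain h1 h2 h3 h4 where H11: "H11 = (h1, h2, h3, h4)" by (cases H11) auto
  have H22: "H22 = (1 - h1, - h2, - h3, 1 - h4)"
    using sum by (cases H22) (auto simp: H11 I2_def algebra_simps eq_neg_iff_add_eq_0)
  have "det2 H11 = 0"
    using R c2 by (simp add: unit_frame_def det2_polar_self)
  moreover have "h1 + h4 = 1"
  proof -
    have "det2_polar H11 H22 = h1 + h4 - 2 * det2 H11"
      by (simp add: H11 H22 algebra_simps)
    with R \<open>det2 H11 = 0\<close> show ?thesis by (simp add: unit_frame_def)
  qed
  ultimately obtain C where C: "det2 C = 1" "m2_conj C E11 = H11"
    using singular_trace_one_conj[of h1 h2 h3 h4] by (auto simp: H11)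
  have "m2_add (m2_conj C E11) (m2_conj C E22) = I2"
    using m2_conj_add[of C E11 E22] m2_conj_I2[OF C(1)] by (simp add: E11_def E22_def I2_def)
  then have "m2_add H11 (m2_conj C E22) = m2_add H11 H22"
    by (simp add: C(2) sum)
  then have "m2_conj C E22 = H22"
    by (cases "m2_conj C E22"; cases H22) (simp add: H11)
  with C show ?thesis by blast
qed

lemma unit_frame_classify:
  fixes G11 G12 G21 G22 :: "'a::field m2"
  assumes R: "unit_frame G11 G12 G21 G22" and sq: "\<forall>a::'a. \<exists>b. b ^ 2 = a" and c2: "(2::'a) \<noteq> 0"
  shows "\<exists>A B. det2 A = 1 \<and> det2 B = 1 \<and>
    (G11 = m2_mul (m2_mul A E11) B \<and> G12 = m2_mul (m2_mul A E12) B \<and> G21 = m2_mul (m2_mul A E21) B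
        \<and> G22 = m2_mul (m2_mul A E22) B
     \<or> G11 = m2_mul (m2_mul A E11) B \<and> G12 = m2_mul (m2_mul A E21) B \<and> G21 = m2_mul (m2_mul A E12) B
        \<and> G22 = m2_mul (m2_mul A E22) B)"
proof -
  define P where "P = m2_add G11 G22"
  have "2 * det2 P = 2"
    using R by (simp add: P_def det2_polar_self[symmetric] det2_polar_add_self unit_frame_def)
  then have dP: "det2 P = 1" using c2 by simp
  define H where "H G = m2_mul (adj2 P) G" for G
  have RH: "unit_frame (H G11) (H G12) (H G21) (H G22)"
    unfolding H_def by (rule unit_frame_mul_left[OF _ R]) (simp add: det2_adj2 dP)
  have "m2_add (H G11) (H G22) = I2"
    by (simp add: H_def m2_mul_add[symmetric] P_def[symmetric] m2_mul_adj2(1)[OF dP])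
  then obtain C where dC: "det2 C = 1" and C: "m2_conj C E11 = H G11" "m2_conj C E22 = H G22"
    using unit_frame_sum_I2_conj[OF RH _ c2] by blast
  define K where "K G = m2_conj (adj2 C) (H G)" for G
  have RK: "unit_frame (K G11) (K G12) (K G21) (K G22)"
    unfolding K_def by (rule unit_frame_conj[OF _ RH]) (simp add: det2_adj2 dC)
  have K: "K G11 = E11" "K G22 = E22"
    by (simp_all add: K_def C[symmetric] m2_conj_cancel[OF dC])
  obtain D where dD: "det2 D = 1" and D: "m2_conj D E11 = E11" "m2_conj D E22 = E22"
    and D_off: "K G12 = m2_conj D E12 \<and> K G21 = m2_conj D E21 \<or> K G12 = m2_conj D E21 \<and> K G21 = m2_conj D E12"
    using unit_frame_diag_normalize[of "K G12" "K G21"] RK K sq c2 by auto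
  define A where "A = m2_mul P (m2_mul C D)"
  define B where "B = adj2 (m2_mul C D)"
  have recover: "G = m2_mul (m2_mul A M) B" if "K G = m2_conj D M" for G M
  proof -
    have "G = m2_mul P (H G)"
      by (simp add: H_def m2_mul_assoc[symmetric] m2_mul_adj2(2)[OF dP] m2_mul_I2)
    also have "H G = m2_conj C (K G)"
      by (simp add: K_def m2_conj_adj2_cancel[OF dC])
    finally show ?thesis
      by (simp add: that m2_conj_m2_conj A_def B_def m2_conj_def m2_mul_assoc adj2_m2_mul)
  qed
  have "det2 A = 1" "det2 B = 1"
    by (simp_all add: A_def B_def det2_m2_mul det2_adj2 dP dC dD)
  moreover have "G11 = m2_mul (m2_mul A E11) B" "G22 = m2_mul (m2_mul A E22) B"
    using recover K D by simp_all
  moreover have "G12 = m2_mul (m2_mul A E12) B \<and> G21 = m2_mul (m2_mul A E21) B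
      \<or> G12 = m2_mul (m2_mul A E21) B \<and> G21 = m2_mul (m2_mul A E12) B"
    using D_off recover by blast
  ultimately show ?thesis by blast
qed

section \<open>Lifting isometries of \<open>V\<close>\<close>

definition V_matrix :: "'a::field k10 \<Rightarrow> 'a m2" where
  "V_matrix v = (v (Ten X X), v (Ten X Y), v (Ten Y X), v (Ten Y Y))"

definition V_of_matrix :: "'a::field m2 \<Rightarrow> 'a k10" where
  "V_of_matrix M = (\<lambda>k. case k of Unit \<Rightarrow> 0 | Ten p q \<Rightarrow> if p \<noteq> E \<and> q \<noteq> E then m2_entry M p q else 0)"

lemma bV_eq_det2_polar: "bV u w = det2_polar (V_matrix u) (V_matrix w)"
  by (simp add: bV_def V_matrix_def algebra_simps)

lemma V_of_matrix_V_matrix: "v \<in> Vspace \<Longrightarrow> V_of_matrix (V_matrix v) = v"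
  by (intro k10_eqI) (simp_all add: Vspace_iff V_matrix_def V_of_matrix_def)

lemma V_matrix_basisvec:
  "V_matrix (basisvec (Ten X X)) = E11" "V_matrix (basisvec (Ten X Y)) = E12"
  "V_matrix (basisvec (Ten Y X)) = E21" "V_matrix (basisvec (Ten Y Y)) = E22"
  by (simp_all add: V_matrix_def basisvec_def E11_def E12_def E21_def E22_def)

lemma basisvec_in_Vspace: "s \<noteq> E \<Longrightarrow> t \<noteq> E \<Longrightarrow> basisvec (Ten s t) \<in> Vspace"
  by (simp add: Vspace_iff basisvec_def)

lemma Vspace_add: "u \<in> Vspace \<Longrightarrow> w \<in> Vspace \<Longrightarrow> k10add u w \<in> Vspace"
  by (simp add: Vspace_iff k10add_def)

lemma Vspace_smul: "u \<in> Vspace \<Longrightarrow> k10smul c u \<in> Vspace"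
  by (simp add: Vspace_iff k10smul_def)

lemma Vspace_basis_decomp:
  assumes "v \<in> Vspace"
  shows "v = k10add
    (k10add (k10smul (v (Ten X X)) (basisvec (Ten X X))) (k10smul (v (Ten X Y)) (basisvec (Ten X Y))))
    (k10add (k10smul (v (Ten Y X)) (basisvec (Ten Y X))) (k10smul (v (Ten Y Y)) (basisvec (Ten Y Y))))"
  using assms by (intro k10_eqI) (simp_all add: Vspace_iff k10add_def k10smul_def basisvec_def)

lemma AutK10_OVb_agree_on_Vspace:
  assumes A: "\<phi> \<in> AutK10" and g: "g \<in> OVb"
    and basis: "\<And>s t. s \<noteq> E \<Longrightarrow> t \<noteq> E \<Longrightarrow> \<phi> (basisvec (Ten s t)) = g (basisvec (Ten s t))"
    and v: "v \<in> Vspace"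
  shows "\<phi> v = g v"
proof -
  have g_add: "\<And>u w. u \<in> Vspace \<Longrightarrow> w \<in> Vspace \<Longrightarrow> g (k10add u w) = k10add (g u) (g w)"
    and g_smul: "\<And>c u. u \<in> Vspace \<Longrightarrow> g (k10smul c u) = k10smul c (g u)"
    using g by (auto simp: OVb_def)
  note decomp = Vspace_basis_decomp[OF v]
  note in_V = Vspace_add Vspace_smul basisvec_in_Vspace
  have "g v = k10add
    (k10add (k10smul (v (Ten X X)) (g (basisvec (Ten X X)))) (k10smul (v (Ten X Y)) (g (basisvec (Ten X Y)))))
    (k10add (k10smul (v (Ten Y X)) (g (basisvec (Ten Y X)))) (k10smul (v (Ten Y Y)) (g (basisvec (Ten Y Y)))))"
    by (subst decomp) (simp add: g_add g_smul in_V)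
  moreover have "\<phi> v = k10add
    (k10add (k10smul (v (Ten X X)) (\<phi> (basisvec (Ten X X)))) (k10smul (v (Ten X Y)) (\<phi> (basisvec (Ten X Y)))))
    (k10add (k10smul (v (Ten Y X)) (\<phi> (basisvec (Ten Y X)))) (k10smul (v (Ten Y Y)) (\<phi> (basisvec (Ten Y Y)))))"
    by (subst decomp) (simp add: AutK10_add[OF A] AutK10_smul[OF A])
  ultimately show ?thesis
    by (simp add: basis)
qed

definition sl2_pair_aut :: "'a::field m2 \<Rightarrow> 'a m2 \<Rightarrow> 'a k10 \<Rightarrow> 'a k10" where
  "sl2_pair_aut A B = lin_ext (tensor_map (sl2_k3 (m2_transpose A)) (sl2_k3 B))"

lemma sl2_pair_aut_in_AutK10: "det2 A = 1 \<Longrightarrow> det2 B = 1 \<Longrightarrow> sl2_pair_aut A B \<in> AutK10"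
  unfolding sl2_pair_aut_def by (rule sl2_pair_in_AutK10) (simp_all add: det2_m2_transpose)

lemma sl2_pair_aut_V_basis:
  fixes A B :: "'a::field m2"
  shows "sl2_pair_aut A B (basisvec (Ten X X)) = V_of_matrix (m2_mul (m2_mul A E11) B)"
    "sl2_pair_aut A B (basisvec (Ten X Y)) = V_of_matrix (m2_mul (m2_mul A E12) B)"
    "sl2_pair_aut A B (basisvec (Ten Y X)) = V_of_matrix (m2_mul (m2_mul A E21) B)"
    "sl2_pair_aut A B (basisvec (Ten Y Y)) = V_of_matrix (m2_mul (m2_mul A E22) B)"
  by (cases A; cases B; rule k10_eqI;
      simp add: sl2_pair_aut_def lin_ext_basisvec tensor_map_def sl2_k3_def V_of_matrix_def
        E11_def E12_def E21_def E22_def)+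

text \<open>The super-twist acts on \<open>V \<cong> M\<^sub>2\<close> by \<open>M \<mapsto> - M\<^sup>T\<close>, whence \<open>m2_neg A\<close>.\<close>
lemma sl2_pair_aut_twist_V_basis:
  fixes A B :: "'a::field m2"
  shows "sl2_pair_aut (m2_neg A) B (lin_ext twist_map (basisvec (Ten X X))) = V_of_matrix (m2_mul (m2_mul A E11) B)"
    "sl2_pair_aut (m2_neg A) B (lin_ext twist_map (basisvec (Ten X Y))) = V_of_matrix (m2_mul (m2_mul A E21) B)"
    "sl2_pair_aut (m2_neg A) B (lin_ext twist_map (basisvec (Ten Y X))) = V_of_matrix (m2_mul (m2_mul A E12) B)"
    "sl2_pair_aut (m2_neg A) B (lin_ext twist_map (basisvec (Ten Y Y))) = V_of_matrix (m2_mul (m2_mul A E22) B)"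
  by (simp only: sl2_pair_aut_def lin_ext_basisvec twist_map_def k10b.case lin_ext_smul;
      cases A; cases B; rule k10_eqI;
      simp add: k3sign_def k3odd_def k10smul_def tensor_map_def sl2_k3_def V_of_matrix_def
        E11_def E12_def E21_def E22_def)+

lemma OVb_V_basis:
  assumes g: "g \<in> OVb" and "s \<noteq> E" "t \<noteq> E"
  shows "g (basisvec (Ten s t)) = V_of_matrix (V_matrix (g (basisvec (Ten s t))))"
proof -
  have "g (basisvec (Ten s t)) \<in> Vspace"
    using g basisvec_in_Vspace[OF assms(2,3)] by (auto simp: OVb_def bij_betw_def)
  then show ?thesis by (simp add: V_of_matrix_V_matrix)
qed

lemma OVb_unit_frame:
  assumes g: "g \<in> OVb"
  shows "unit_frame (V_matrix (g (basisvec (Ten X X)))) (V_matrix (g (basisvec (Ten X Y))))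
    (V_matrix (g (basisvec (Ten Y X)))) (V_matrix (g (basisvec (Ten Y Y))))"
proof -
  have iso: "bV (g u) (g w) = bV u w" if "u \<in> Vspace" "w \<in> Vspace" for u w
    using g that unfolding OVb_def by blast
  have "det2_polar (V_matrix (g (basisvec (Ten s t)))) (V_matrix (g (basisvec (Ten s' t'))))
      = det2_polar (V_matrix (basisvec (Ten s t))) (V_matrix (basisvec (Ten s' t')))"
    if "s \<noteq> E" "t \<noteq> E" "s' \<noteq> E" "t' \<noteq> E" for s t s' t'
    using iso[OF basisvec_in_Vspace[OF that(1,2)] basisvec_in_Vspace[OF that(3,4)]]
    by (simp flip: bV_eq_det2_polar)
  then show ?thesis
    by (simp add: unit_frame_def V_matrix_basisvec) (simp add: E11_def E12_def E21_def E22_def)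
qed

lemma OVb_lift:
  fixes g :: "'a::field k10 \<Rightarrow> 'a k10"
  assumes g: "g \<in> OVb" and c2: "(2::'a) \<noteq> 0" and sq: "\<forall>a::'a. \<exists>b. b ^ 2 = a"
  shows "\<exists>\<phi>\<in>AutK10. \<forall>v\<in>Vspace. \<phi> v = g v"
proof -
  define G where "G s t = V_matrix (g (basisvec (Ten s t)))" for s t
  obtain A B where dA: "det2 A = 1" and dB: "det2 B = 1" and frame:
    "G X X = m2_mul (m2_mul A E11) B \<and> G X Y = m2_mul (m2_mul A E12) B \<and> G Y X = m2_mul (m2_mul A E21) B
        \<and> G Y Y = m2_mul (m2_mul A E22) B
     \<or> G X X = m2_mul (m2_mul A E11) B \<and> G X Y = m2_mul (m2_mul A E21) B \<and> G Y X = m2_mul (m2_mul A E12) B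
        \<and> G Y Y = m2_mul (m2_mul A E22) B"
    using unit_frame_classify[OF OVb_unit_frame[OF g] sq c2] unfolding G_def by blast
  have g_basis: "g (basisvec (Ten s t)) = V_of_matrix (G s t)" if "s \<noteq> E" "t \<noteq> E" for s t
    using OVb_V_basis[OF g that] by (simp add: G_def)
  have V_basis_cases: "P s t" if "s \<noteq> E" "t \<noteq> E" "P X X" "P X Y" "P Y X" "P Y Y" for P s t
    using that by (cases s; cases t) simp_all
  from frame show ?thesis
  proof
    assume G: "G X X = m2_mul (m2_mul A E11) B \<and> G X Y = m2_mul (m2_mul A E12) B
      \<and> G Y X = m2_mul (m2_mul A E21) B \<and> G Y Y = m2_mul (m2_mul A E22) B"
    have aut: "sl2_pair_aut A B \<in> AutK10" by (rule sl2_pair_aut_in_AutK10[OF dA dB])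
    have "sl2_pair_aut A B (basisvec (Ten s t)) = g (basisvec (Ten s t))" if "s \<noteq> E" "t \<noteq> E" for s t
      using that by (rule V_basis_cases) (simp_all add: g_basis G sl2_pair_aut_V_basis)
    with aut show ?thesis
      using AutK10_OVb_agree_on_Vspace[OF aut g] by blast
  next
    assume G: "G X X = m2_mul (m2_mul A E11) B \<and> G X Y = m2_mul (m2_mul A E21) B
      \<and> G Y X = m2_mul (m2_mul A E12) B \<and> G Y Y = m2_mul (m2_mul A E22) B"
    have aut: "sl2_pair_aut (m2_neg A) B \<circ> lin_ext twist_map \<in> AutK10"
      by (rule AutK10_comp[OF sl2_pair_aut_in_AutK10 twist_in_AutK10]) (simp_all add: det2_m2_neg dA dB)
    have "(sl2_pair_aut (m2_neg A) B \<circ> lin_ext twist_map) (basisvec (Ten s t)) = g (basisvec (Ten s t))"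
      if "s \<noteq> E" "t \<noteq> E" for s t
      using that by (rule V_basis_cases) (simp_all add: g_basis G sl2_pair_aut_twist_V_basis)
    with aut show ?thesis
      using AutK10_OVb_agree_on_Vspace[OF aut g] by blast
  qed
qed

lemma tauK10_fixes_Vspace: "v \<in> Vspace \<Longrightarrow> tauK10 v = v"
  by (intro k10_eqI) (simp_all add: Vspace_iff tauK10_def k10odd_def k3odd_def)

theorem lemma3p2:
  assumes char2: "(2::'a::field) \<noteq> 0"
      and char3: "(3::'a) \<noteq> 0"
      and squares: "\<forall>a::'a. \<exists>b. b ^ 2 = a"
  shows "(\<forall>\<phi>\<in>(AutK10 :: ('a k10 \<Rightarrow> 'a k10) set). \<phi> \<in> OVb)
       \<and> (\<forall>g\<in>(OVb :: ('a k10 \<Rightarrow> 'a k10) set). \<exists>\<phi>\<in>AutK10. \<forall>v\<in>Vspace. \<phi> v = g v)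
       \<and> {\<phi>\<in>(AutK10 :: ('a k10 \<Rightarrow> 'a k10) set). \<forall>v\<in>Vspace. \<phi> v = v} = {id, tauK10}"
proof (intro conjI)
  show "\<forall>\<phi>\<in>(AutK10 :: ('a k10 \<Rightarrow> 'a k10) set). \<phi> \<in> OVb"
    using AutK10_in_OVb[OF _ char2] by blast
  show "\<forall>g\<in>(OVb :: ('a k10 \<Rightarrow> 'a k10) set). \<exists>\<phi>\<in>AutK10. \<forall>v\<in>Vspace. \<phi> v = g v"
    using OVb_lift[OF _ char2 squares] by blast
  show "{\<phi>\<in>(AutK10 :: ('a k10 \<Rightarrow> 'a k10) set). \<forall>v\<in>Vspace. \<phi> v = v} = {id, tauK10}"
    using AutK10_fix_Vspace[OF _ char2] id_in_AutK10 tauK10_in_AutK10 tauK10_fixes_Vspace by auto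
qed

end
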